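(* Let $(\mathcal B,<)$ be a monoidal poset and $B_0$ a maximal element of it. Then for every $B\in\mathcal B$ there exist $s\ge0$ and nodes $i_1,\dots,i_s$ such that $B_0>r_{i_s}B_0>r_{i_{s-1}}r_{i_s}B_0>\cdots>r_{i_1}r_{i_2}\cdots r_{i_s}B_0=B$.
   Context: Setting: $M$ is a spherical simply laced Coxeter diagram with nodes $1,\dots,n$ ($i\sim j$: distinct adjacent nodes; $i\not\sim j$ otherwise); $W$ its Weyl group with positive roots $\Phi^+$, fundamental roots $\alpha_i$, reflections $r_i$, inner product with $(\alpha_i,\alpha_i)=2$, $(\alpha_i,\alpha_j)=-1$ if $i\sim j$, $0$ otherwise; height $\mathrm{ht}(\sum a_k\alpha_k)=\sum a_k$. For a set $B$ of mutually orthogonal positive roots, $wB=\Phi^+\cap\{\pm w\beta:\beta\in B\}$. A $W$-orbit $\mathcal B$ of such sets is admissible if for every $B\in\mathcal B$, all nodes $i\not\sim j$ and root $\gamma$ with $\gamma,\gamma-\alpha_i+\alpha_j\in B$, $r_iB=r_jB$. For $B,C\in\mathcal B$ write $B\prec C$ if $B\ne C$ and the minimal height of an element of $B\setminus C$ is strictly smaller than the minimal height of an element of $C\setminus B$. For admissible $\mathcal B$, the monoidal poset $(\mathcal B,<)$ is $\mathcal B$ with the partial order $<$ given by the transitive closure of $\{(B,r_jB): B\in\mathcal B,\ j\text{ a node},\ B\prec r_jB\}$; $>$ is the reverse relation. *)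

theory Defs
  imports Main
begin

text \<open>Elements of the root lattice are coefficient vectors nat \<Rightarrow> int
(coordinates outside 1..n are 0 for all roots).\<close>

definition simply_laced_diagram :: "nat \<Rightarrow> (nat \<Rightarrow> nat \<Rightarrow> bool) \<Rightarrow> bool" where
  "simply_laced_diagram n adj \<longleftrightarrow>
     (\<forall>i j. adj i j \<longrightarrow> i \<in> {1..n} \<and> j \<in> {1..n} \<and> i \<noteq> j \<and> adj j i)"

definition cartan :: "(nat \<Rightarrow> nat \<Rightarrow> bool) \<Rightarrow> nat \<Rightarrow> nat \<Rightarrow> int" where
  "cartan adj i j = (if i = j then 2 else if adj i j then -1 else 0)"

definition ip :: "nat \<Rightarrow> (nat \<Rightarrow> nat \<Rightarrow> bool) \<Rightarrow> (nat \<Rightarrow> int) \<Rightarrow> (nat \<Rightarrow> int) \<Rightarrow> int" where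
  "ip n adj v w = (\<Sum>i\<in>{1..n}. \<Sum>j\<in>{1..n}. v i * cartan adj i j * w j)"

definition alpha :: "nat \<Rightarrow> nat \<Rightarrow> int" where
  "alpha i = (\<lambda>k. if k = i then 1 else 0)"

definition refl :: "nat \<Rightarrow> (nat \<Rightarrow> nat \<Rightarrow> bool) \<Rightarrow> nat \<Rightarrow> (nat \<Rightarrow> int) \<Rightarrow> (nat \<Rightarrow> int)" where
  "refl n adj i v = (\<lambda>k. v k - ip n adj v (alpha i) * alpha i k)"

inductive_set weyl :: "nat \<Rightarrow> (nat \<Rightarrow> nat \<Rightarrow> bool) \<Rightarrow> ((nat \<Rightarrow> int) \<Rightarrow> (nat \<Rightarrow> int)) set"
  for n adj where
  weyl_id: "id \<in> weyl n adj"
| weyl_step: "w \<in> weyl n adj \<Longrightarrow> i \<in> {1..n} \<Longrightarrow> refl n adj i \<circ> w \<in> weyl n adj"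

definition spherical :: "nat \<Rightarrow> (nat \<Rightarrow> nat \<Rightarrow> bool) \<Rightarrow> bool" where
  "spherical n adj \<longleftrightarrow> finite (weyl n adj)"

definition roots :: "nat \<Rightarrow> (nat \<Rightarrow> nat \<Rightarrow> bool) \<Rightarrow> (nat \<Rightarrow> int) set" where
  "roots n adj = {w (alpha i) | w i. w \<in> weyl n adj \<and> i \<in> {1..n}}"

definition pos_roots :: "nat \<Rightarrow> (nat \<Rightarrow> nat \<Rightarrow> bool) \<Rightarrow> (nat \<Rightarrow> int) set" where
  "pos_roots n adj = {\<gamma> \<in> roots n adj. \<forall>k. 0 \<le> \<gamma> k}"

definition ht :: "nat \<Rightarrow> (nat \<Rightarrow> int) \<Rightarrow> int" where
  "ht n \<gamma> = (\<Sum>k\<in>{1..n}. \<gamma> k)"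

definition orth_pos_set :: "nat \<Rightarrow> (nat \<Rightarrow> nat \<Rightarrow> bool) \<Rightarrow> (nat \<Rightarrow> int) set \<Rightarrow> bool" where
  "orth_pos_set n adj B \<longleftrightarrow> B \<subseteq> pos_roots n adj \<and>
     (\<forall>\<beta>\<in>B. \<forall>\<beta>'\<in>B. \<beta> \<noteq> \<beta>' \<longrightarrow> ip n adj \<beta> \<beta>' = 0)"

definition act :: "nat \<Rightarrow> (nat \<Rightarrow> nat \<Rightarrow> bool) \<Rightarrow> ((nat \<Rightarrow> int) \<Rightarrow> (nat \<Rightarrow> int))
                    \<Rightarrow> (nat \<Rightarrow> int) set \<Rightarrow> (nat \<Rightarrow> int) set" where
  "act n adj w B = {\<gamma> \<in> pos_roots n adj. \<exists>\<beta>\<in>B. \<gamma> = w \<beta> \<or> \<gamma> = - w \<beta>}"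

definition is_orbit :: "nat \<Rightarrow> (nat \<Rightarrow> nat \<Rightarrow> bool) \<Rightarrow> (nat \<Rightarrow> int) set set \<Rightarrow> bool" where
  "is_orbit n adj \<B> \<longleftrightarrow>
     (\<exists>B1. orth_pos_set n adj B1 \<and> \<B> = {act n adj w B1 | w. w \<in> weyl n adj})"

definition admissible :: "nat \<Rightarrow> (nat \<Rightarrow> nat \<Rightarrow> bool) \<Rightarrow> (nat \<Rightarrow> int) set set \<Rightarrow> bool" where
  "admissible n adj \<B> \<longleftrightarrow> is_orbit n adj \<B> \<and>
     (\<forall>B\<in>\<B>. \<forall>i\<in>{1..n}. \<forall>j\<in>{1..n}. \<not> adj i j \<longrightarrow>
        (\<forall>\<gamma>. \<gamma> \<in> B \<and> (\<lambda>k. \<gamma> k - alpha i k + alpha j k) \<in> B \<longrightarrow>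
             act n adj (refl n adj i) B = act n adj (refl n adj j) B))"

definition prec :: "nat \<Rightarrow> (nat \<Rightarrow> int) set \<Rightarrow> (nat \<Rightarrow> int) set \<Rightarrow> bool" where
  "prec n B C \<longleftrightarrow> B \<noteq> C \<and> Min (ht n ` (B - C)) < Min (ht n ` (C - B))"

definition mstep :: "nat \<Rightarrow> (nat \<Rightarrow> nat \<Rightarrow> bool) \<Rightarrow> (nat \<Rightarrow> int) set set
                      \<Rightarrow> (nat \<Rightarrow> int) set \<Rightarrow> (nat \<Rightarrow> int) set \<Rightarrow> bool" where
  "mstep n adj \<B> B C \<longleftrightarrow> B \<in> \<B> \<and>
     (\<exists>j\<in>{1..n}. C = act n adj (refl n adj j) B \<and> prec n B C)"

definition mless :: "nat \<Rightarrow> (nat \<Rightarrow> nat \<Rightarrow> bool) \<Rightarrow> (nat \<Rightarrow> int) set set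
                      \<Rightarrow> (nat \<Rightarrow> int) set \<Rightarrow> (nat \<Rightarrow> int) set \<Rightarrow> bool" where
  "mless n adj \<B> = (mstep n adj \<B>)\<^sup>+\<^sup>+"

text \<open>chain is k = r_{i_{k+1}} ... r_{i_s} B0 for is = [i_1,...,i_s].\<close>
definition chain :: "nat \<Rightarrow> (nat \<Rightarrow> nat \<Rightarrow> bool) \<Rightarrow> nat list \<Rightarrow> (nat \<Rightarrow> int) set
                      \<Rightarrow> nat \<Rightarrow> (nat \<Rightarrow> int) set" where
  "chain n adj is B0 k = foldr (\<lambda>i C. act n adj (refl n adj i) C) (drop k is) B0"

end

theory Submission
  imports Defs Complex_Main "HOL-Library.Confluence"
begin

text \<open>Call \<open>B \<rightarrow> r\<^sub>j B\<close> an ascending step if \<open>B \<prec> r\<^sub>j B\<close>. On the orbit these steps terminate, since a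
  potential built from the heights of the roots decreases, and they are locally confluent: \<open>B \<prec> r\<^sub>j B\<close>
  is equivalent to a local condition on the roots of \<open>B\<close> with inner product \<open>\<plusminus>1\<close> against \<open>\<alpha>\<^sub>j\<close>, and
  two competing steps are reconciled by the braid relation for adjacent nodes and by admissibility
  for non-adjacent ones. By Newman's lemma the steps are confluent. Any two members of the orbit are
  linked by simple reflections, each of which is an ascending step in one direction or the other, so
  every \<open>B\<close> ascends to the unique maximal element \<open>B\<^sub>0\<close>; reading such a path backwards gives the
  chain. The root-system facts used along the way (positive definiteness of the Cartan form, roots of
  norm 2 are sign-coherent) come from the finiteness of the Weyl group.\<close>

section \<open>The Cartan form and simple reflections\<close>

lemma cartan_sym:
  assumes "simply_laced_diagram n adj"
  shows "cartan adj i j = cartan adj j i"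
  using assms unfolding simply_laced_diagram_def cartan_def by auto

lemma ip_sym:
  assumes "simply_laced_diagram n adj"
  shows "ip n adj v w = ip n adj w v"
proof -
  have "ip n adj v w = (\<Sum>j\<in>{1..n}. \<Sum>i\<in>{1..n}. v i * cartan adj i j * w j)"
    unfolding ip_def by (rule sum.swap)
  also have "\<dots> = ip n adj w v"
    unfolding ip_def by (intro sum.cong refl) (simp add: cartan_sym[OF assms] mult.commute mult.left_commute)
  finally show ?thesis .
qed

lemma ip_add_left: "ip n adj (\<lambda>k. u k + v k) w = ip n adj u w + ip n adj v w"
  unfolding ip_def by (simp add: algebra_simps sum.distrib)

lemma ip_add_right: "ip n adj w (\<lambda>k. u k + v k) = ip n adj w u + ip n adj w v"
  unfolding ip_def by (simp add: algebra_simps sum.distrib)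

lemma ip_scale_left: "ip n adj (\<lambda>k. c * u k) w = c * ip n adj u w"
  unfolding ip_def by (simp add: algebra_simps sum_distrib_left)

lemma ip_scale_right: "ip n adj w (\<lambda>k. c * u k) = c * ip n adj w u"
  unfolding ip_def by (simp add: algebra_simps sum_distrib_left)

lemma ip_diff_left: "ip n adj (\<lambda>k. u k - v k) w = ip n adj u w - ip n adj v w"
  unfolding ip_def by (simp add: algebra_simps sum_subtractf)

lemma ip_diff_right: "ip n adj w (\<lambda>k. u k - v k) = ip n adj w u - ip n adj w v"
  unfolding ip_def by (simp add: algebra_simps sum_subtractf)

lemma ip_uminus_left: "ip n adj (\<lambda>k. - u k) w = - ip n adj u w"
  unfolding ip_def by (simp add: sum_negf)

lemma ip_uminus_right: "ip n adj w (\<lambda>k. - u k) = - ip n adj w u"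
  unfolding ip_def by (simp add: sum_negf)

lemma ip_diff_scale_left: "ip n adj (\<lambda>k. u k - c * a k) w = ip n adj u w - c * ip n adj a w"
  by (simp add: ip_diff_left ip_scale_left)

lemma ip_diff_scale_right: "ip n adj w (\<lambda>k. u k - c * a k) = ip n adj w u - c * ip n adj w a"
  by (simp add: ip_diff_right ip_scale_right)

lemma ip_vanishing_left: "\<forall>k\<in>{1..n}. v k = 0 \<Longrightarrow> ip n adj v w = 0"
  unfolding ip_def by simp

lemma ip_alpha_right:
  assumes "j \<in> {1..n}"
  shows "ip n adj v (alpha j) = (\<Sum>i\<in>{1..n}. v i * cartan adj i j)"
proof -
  have "ip n adj v (alpha j) = (\<Sum>i\<in>{1..n}. \<Sum>k\<in>{1..n}. if k = j then v i * cartan adj i k else 0)"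
    unfolding ip_def alpha_def by (intro sum.cong refl) auto
  also have "\<dots> = (\<Sum>i\<in>{1..n}. v i * cartan adj i j)"
    using assms by (simp add: sum.delta')
  finally show ?thesis .
qed

lemma ip_alpha_alpha:
  assumes "i \<in> {1..n}" "j \<in> {1..n}"
  shows "ip n adj (alpha i) (alpha j) = cartan adj i j"
proof -
  have "ip n adj (alpha i) (alpha j) = (\<Sum>k\<in>{1..n}. if k = i then cartan adj k j else 0)"
    unfolding ip_alpha_right[OF assms(2)] by (intro sum.cong refl) (simp add: alpha_def)
  also have "\<dots> = cartan adj i j" using assms(1) by (simp add: sum.delta')
  finally show ?thesis .
qed

lemma ip_alpha_self: "i \<in> {1..n} \<Longrightarrow> ip n adj (alpha i) (alpha i) = 2"
  by (simp add: ip_alpha_alpha cartan_def)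

lemma ip_refl_alpha:
  "ip n adj (refl n adj i v) (alpha l) = ip n adj v (alpha l) - ip n adj v (alpha i) * ip n adj (alpha i) (alpha l)"
  unfolding refl_def by (rule ip_diff_scale_left)

lemma refl_refl:
  assumes "i \<in> {1..n}"
  shows "refl n adj i (refl n adj i v) = v"
  using ip_refl_alpha[of n adj i v i] ip_alpha_self[OF assms] by (simp add: refl_def algebra_simps)

lemma refl_alpha_self: "i \<in> {1..n} \<Longrightarrow> refl n adj i (alpha i) = (\<lambda>k. - alpha i k)"
  unfolding refl_def by (rule ext) (simp add: ip_alpha_self)

lemma refl_eq_self_if_orth: "ip n adj v (alpha j) = 0 \<Longrightarrow> refl n adj j v = v"
  unfolding refl_def by simp

lemma ip_alpha_eq_0_if_refl_fixed:
  assumes "refl n adj j v = v"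
  shows "ip n adj v (alpha j) = 0"
proof -
  have "refl n adj j v j = v j" using assms by simp
  then show ?thesis unfolding refl_def alpha_def by simp
qed

lemma ip_refl_refl:
  assumes "simply_laced_diagram n adj" "i \<in> {1..n}"
  shows "ip n adj (refl n adj i v) (refl n adj i w) = ip n adj v w"
  unfolding refl_def
  by (simp only: ip_diff_scale_left ip_diff_scale_right ip_alpha_self[OF assms(2)] ip_sym[OF assms(1), of "alpha i" w])
    (simp add: algebra_simps)

lemma refl_uminus: "refl n adj i (\<lambda>k. - u k) = (\<lambda>k. - refl n adj i u k)"
  unfolding refl_def by (rule ext) (simp add: ip_uminus_left algebra_simps)

lemma refl_diff_scale:
  "refl n adj i (\<lambda>k. u k - c * a k) = (\<lambda>k. refl n adj i u k - c * refl n adj i a k)"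
  unfolding refl_def by (rule ext) (simp add: ip_diff_scale_left algebra_simps)

lemma ht_diff: "ht n (\<lambda>k. u k - a k) = ht n u - ht n a"
  unfolding ht_def by (simp add: sum_subtractf)

lemma ht_diff_scale: "ht n (\<lambda>k. u k - c * a k) = ht n u - c * ht n a"
  unfolding ht_def by (simp add: sum_subtractf sum_distrib_left)

lemma ht_alpha: "i \<in> {1..n} \<Longrightarrow> ht n (alpha i) = 1"
  unfolding ht_def alpha_def by simp

lemma ht_refl: "i \<in> {1..n} \<Longrightarrow> ht n (refl n adj i v) = ht n v - ip n adj v (alpha i)"
  unfolding refl_def by (simp add: ht_diff_scale ht_alpha)

lemma refl_in_weyl: "i \<in> {1..n} \<Longrightarrow> refl n adj i \<in> weyl n adj"
  using weyl.weyl_step[OF weyl.weyl_id] by simp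

lemma weyl_comp_closed:
  assumes "w \<in> weyl n adj" "v \<in> weyl n adj"
  shows "w \<circ> v \<in> weyl n adj"
  using assms(1)
proof (induction rule: weyl.induct)
  case weyl_id
  then show ?case using assms(2) by simp
next
  case (weyl_step w i)
  have "refl n adj i \<circ> (w \<circ> v) \<in> weyl n adj" by (rule weyl.weyl_step[OF weyl_step.IH weyl_step.hyps(2)])
  then show ?case by (simp only: comp_assoc)
qed

lemma weyl_inverse:
  assumes "w \<in> weyl n adj"
  shows "\<exists>w'\<in>weyl n adj. w' \<circ> w = id \<and> w \<circ> w' = id"
  using assms
proof (induction rule: weyl.induct)
  case weyl_id
  then show ?case by (intro bexI[of _ id]) (auto intro: weyl.intros)
next
  case (weyl_step w i)
  then obtain w' where w': "w' \<in> weyl n adj" "w' \<circ> w = id" "w \<circ> w' = id" by blast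
  have "w' (w x) = x" "w (w' x) = x" for x
    using w'(2,3) by (simp_all add: pointfree_idE)
  then have "(w' \<circ> refl n adj i) \<circ> (refl n adj i \<circ> w) = id" "(refl n adj i \<circ> w) \<circ> (w' \<circ> refl n adj i) = id"
    by (simp_all add: comp_def id_def refl_refl[OF weyl_step.hyps(2)])
  then show ?case using weyl_comp_closed[OF w'(1) refl_in_weyl[OF weyl_step.hyps(2)]] by blast
qed

lemma ip_weyl_invariant:
  assumes "simply_laced_diagram n adj" "w \<in> weyl n adj"
  shows "ip n adj (w u) (w v) = ip n adj u v"
  using assms(2) by (induction arbitrary: u v rule: weyl.induct) (auto simp: ip_refl_refl[OF assms(1)])

lemma weyl_uminus: "w \<in> weyl n adj \<Longrightarrow> w (\<lambda>k. - u k) = (\<lambda>k. - w u k)"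
  by (induction arbitrary: u rule: weyl.induct) (simp_all add: refl_uminus)

lemma weyl_diff_scale: "w \<in> weyl n adj \<Longrightarrow> w (\<lambda>k. u k - c * a k) = (\<lambda>k. w u k - c * w a k)"
  by (induction arbitrary: u a rule: weyl.induct) (simp_all add: refl_diff_scale)

definition supported :: "nat \<Rightarrow> (nat \<Rightarrow> int) \<Rightarrow> bool" where
  "supported n v \<longleftrightarrow> (\<forall>k. k \<notin> {1..n} \<longrightarrow> v k = 0)"

lemma supported_eqI: "supported n u \<Longrightarrow> supported n v \<Longrightarrow> \<forall>k\<in>{1..n}. u k = v k \<Longrightarrow> u = v"
  unfolding supported_def by (rule ext) metis

lemma supported_alpha: "i \<in> {1..n} \<Longrightarrow> supported n (alpha i)"
  unfolding supported_def alpha_def by auto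

lemma supported_refl: "i \<in> {1..n} \<Longrightarrow> supported n v \<Longrightarrow> supported n (refl n adj i v)"
  unfolding supported_def refl_def alpha_def by auto

lemma supported_weyl: "w \<in> weyl n adj \<Longrightarrow> supported n v \<Longrightarrow> supported n (w v)"
  by (induction arbitrary: v rule: weyl.induct) (auto simp: supported_refl)

section \<open>Positive definiteness\<close>

text \<open>Averaging the standard dot product over the finite Weyl group gives a positive definite
  invariant form; comparing it with \<open>ip\<close> via the reflections shows that \<open>ip\<close> is positive definite.\<close>

definition std_dot :: "nat \<Rightarrow> (nat \<Rightarrow> int) \<Rightarrow> (nat \<Rightarrow> int) \<Rightarrow> int" where
  "std_dot n u v = (\<Sum>k\<in>{1..n}. u k * v k)"

definition avg_form :: "nat \<Rightarrow> (nat \<Rightarrow> nat \<Rightarrow> bool) \<Rightarrow> (nat \<Rightarrow> int) \<Rightarrow> (nat \<Rightarrow> int) \<Rightarrow> int" where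
  "avg_form n adj u v = (\<Sum>g\<in>weyl n adj. std_dot n (g u) (g v))"

lemma bij_betw_comp_weyl:
  assumes "h \<in> weyl n adj"
  shows "bij_betw (\<lambda>g. g \<circ> h) (weyl n adj) (weyl n adj)"
proof -
  obtain h' where h': "h' \<in> weyl n adj" "h' \<circ> h = id" "h \<circ> h' = id" using weyl_inverse[OF assms] by blast
  show ?thesis
  proof (rule bij_betw_byWitness[where f'="\<lambda>g. g \<circ> h'"])
    show "(\<lambda>g. g \<circ> h) ` weyl n adj \<subseteq> weyl n adj" using weyl_comp_closed assms by blast
    show "(\<lambda>g. g \<circ> h') ` weyl n adj \<subseteq> weyl n adj" using weyl_comp_closed h'(1) by blast
    show "\<forall>x\<in>weyl n adj. x \<circ> h \<circ> h' = x" using h'(3) by (simp add: comp_assoc)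
    show "\<forall>x\<in>weyl n adj. x \<circ> h' \<circ> h = x" using h'(2) by (simp add: comp_assoc)
  qed
qed

lemma avg_form_weyl_invariant:
  assumes "h \<in> weyl n adj"
  shows "avg_form n adj (h u) (h v) = avg_form n adj u v"
  unfolding avg_form_def
  using sum.reindex_bij_betw[OF bij_betw_comp_weyl[OF assms], of "\<lambda>g. std_dot n (g u) (g v)"] by simp

lemma avg_form_sym: "avg_form n adj u v = avg_form n adj v u"
  unfolding avg_form_def std_dot_def by (simp add: mult.commute)

lemma avg_form_diff_scale_left:
  "avg_form n adj (\<lambda>k. u k - c * a k) v = avg_form n adj u v - c * avg_form n adj a v"
proof -
  have "std_dot n (g (\<lambda>k. u k - c * a k)) (g v) = std_dot n (g u) (g v) - c * std_dot n (g a) (g v)"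
    if "g \<in> weyl n adj" for g
    unfolding weyl_diff_scale[OF that] std_dot_def by (simp add: algebra_simps sum_subtractf sum_distrib_left)
  then show ?thesis
    unfolding avg_form_def by (simp add: sum_subtractf sum_distrib_left)
qed

lemma avg_form_uminus_right: "avg_form n adj u (\<lambda>k. - v k) = - avg_form n adj u v"
proof -
  have "std_dot n (g u) (g (\<lambda>k. - v k)) = - std_dot n (g u) (g v)" if "g \<in> weyl n adj" for g
    unfolding weyl_uminus[OF that] std_dot_def by (simp add: sum_negf)
  then show ?thesis
    unfolding avg_form_def by (simp add: sum_negf)
qed

text \<open>Both forms are invariant under \<open>r\<^sub>i\<close>, which negates \<open>\<alpha>\<^sub>i\<close>.\<close>

lemma ip_alpha_avg_form:
  assumes "i \<in> {1..n}"
  shows "ip n adj v (alpha i) * avg_form n adj (alpha i) (alpha i) = 2 * avg_form n adj v (alpha i)"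
proof -
  let ?s = "ip n adj v (alpha i)"
  have "avg_form n adj v (alpha i) = avg_form n adj (refl n adj i v) (refl n adj i (alpha i))"
    using avg_form_weyl_invariant[OF refl_in_weyl[OF assms]] by simp
  also have "\<dots> = avg_form n adj (\<lambda>k. v k - ?s * alpha i k) (\<lambda>k. - alpha i k)"
    by (simp add: refl_alpha_self[OF assms]) (simp add: refl_def)
  also have "\<dots> = - (avg_form n adj v (alpha i) - ?s * avg_form n adj (alpha i) (alpha i))"
    by (simp add: avg_form_uminus_right avg_form_diff_scale_left)
  finally show ?thesis by simp
qed

lemma sum_swap_pairs:
  "(\<Sum>i\<in>A. \<Sum>j\<in>A. \<Sum>g\<in>G. \<Sum>k\<in>K. F i j g k) = (\<Sum>g\<in>G. \<Sum>k\<in>K. \<Sum>i\<in>A. \<Sum>j\<in>A. F i j g k)"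
proof -
  have "(\<Sum>i\<in>A. \<Sum>j\<in>A. \<Sum>g\<in>G. \<Sum>k\<in>K. F i j g k) = (\<Sum>i\<in>A. \<Sum>g\<in>G. \<Sum>k\<in>K. \<Sum>j\<in>A. F i j g k)"
    by (intro sum.cong refl) (simp only: sum.swap[of _ A] sum.swap[of _ A K])
  also have "\<dots> = (\<Sum>g\<in>G. \<Sum>k\<in>K. \<Sum>i\<in>A. \<Sum>j\<in>A. F i j g k)"
    by (simp only: sum.swap[of _ A G] sum.swap[of _ A K])
  finally show ?thesis .
qed

lemma avg_form_sum_squares:
  fixes u :: "nat \<Rightarrow> real"
  shows "(\<Sum>i\<in>{1..n}. \<Sum>j\<in>{1..n}. u i * u j * of_int (avg_form n adj (alpha i) (alpha j)))
       = (\<Sum>g\<in>weyl n adj. \<Sum>k\<in>{1..n}. (\<Sum>i\<in>{1..n}. u i * of_int (g (alpha i) k))\<^sup>2)"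
proof -
  let ?t = "\<lambda>g k i. u i * of_int (g (alpha i) k)"
  have "(\<Sum>i\<in>{1..n}. \<Sum>j\<in>{1..n}. u i * u j * of_int (avg_form n adj (alpha i) (alpha j)))
     = (\<Sum>i\<in>{1..n}. \<Sum>j\<in>{1..n}. \<Sum>g\<in>weyl n adj. \<Sum>k\<in>{1..n}. ?t g k i * ?t g k j)"
    unfolding avg_form_def std_dot_def by (simp add: sum_distrib_left algebra_simps)
  also have "\<dots> = (\<Sum>g\<in>weyl n adj. \<Sum>k\<in>{1..n}. \<Sum>i\<in>{1..n}. \<Sum>j\<in>{1..n}. ?t g k i * ?t g k j)"
    by (rule sum_swap_pairs)
  also have "\<dots> = (\<Sum>g\<in>weyl n adj. \<Sum>k\<in>{1..n}. (\<Sum>i\<in>{1..n}. ?t g k i)\<^sup>2)"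
    by (simp add: power2_eq_square sum_product)
  finally show ?thesis .
qed

lemma avg_form_pos_definite:
  fixes u :: "nat \<Rightarrow> real"
  assumes fin: "finite (weyl n adj)" and nz: "\<exists>k\<in>{1..n}. u k \<noteq> 0"
  shows "(\<Sum>i\<in>{1..n}. \<Sum>j\<in>{1..n}. u i * u j * of_int (avg_form n adj (alpha i) (alpha j))) > 0"
proof -
  let ?F = "\<lambda>g. \<Sum>k\<in>{1..n}. (\<Sum>i\<in>{1..n}. u i * of_int (g (alpha i) k))\<^sup>2"
  have "(\<Sum>i\<in>{1..n}. u i * of_int (alpha i k)) = u k" if "k \<in> {1..n}" for k
  proof -
    have "(\<Sum>i\<in>{1..n}. u i * of_int (alpha i k)) = (\<Sum>i\<in>{1..n}. if i = k then u i else 0)"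
      by (intro sum.cong refl) (auto simp: alpha_def)
    then show ?thesis using that by simp
  qed
  then have "?F id = (\<Sum>k\<in>{1..n}. (u k)\<^sup>2)" by simp
  moreover obtain k where k: "k \<in> {1..n}" "u k \<noteq> 0" using nz by blast
  then have "(u k)\<^sup>2 \<le> (\<Sum>k\<in>{1..n}. (u k)\<^sup>2)" by (intro member_le_sum) auto
  moreover have "(u k)\<^sup>2 > 0" using k by simp
  moreover have "?F id \<le> (\<Sum>g\<in>weyl n adj. ?F g)"
    by (rule member_le_sum[OF weyl.weyl_id _ fin]) (simp add: sum_nonneg)
  ultimately show ?thesis unfolding avg_form_sum_squares by linarith
qed

lemma avg_form_alpha_pos:
  assumes fin: "finite (weyl n adj)" and i: "i \<in> {1..n}"
  shows "avg_form n adj (alpha i) (alpha i) > 0"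
proof -
  have "std_dot n (alpha i) (alpha i) = (\<Sum>k\<in>{1..n}. if k = i then 1 else 0)"
    unfolding std_dot_def alpha_def by (intro sum.cong refl) simp
  then have "std_dot n (alpha i) (alpha i) = 1" using i by simp
  moreover have "std_dot n (id (alpha i)) (id (alpha i)) \<le> avg_form n adj (alpha i) (alpha i)"
    unfolding avg_form_def by (rule member_le_sum[OF weyl.weyl_id _ fin]) (simp add: std_dot_def sum_nonneg)
  ultimately show ?thesis by simp
qed

text \<open>Both forms are symmetric, so \<open>c\<^sub>i\<^sub>j \<noteq> 0\<close> forces \<open>\<alpha>\<^sub>i\<close> and \<open>\<alpha>\<^sub>j\<close> to have the same averaged length;
  after rescaling each \<open>\<alpha>\<^sub>i\<close> by its averaged length, the Cartan matrix is twice the Gram matrix of the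
  averaged form.\<close>

lemma cartan_eq_avg_form_normalized:
  assumes sld: "simply_laced_diagram n adj" and fin: "finite (weyl n adj)"
    and i: "i \<in> {1..n}" and j: "j \<in> {1..n}"
  defines "d \<equiv> \<lambda>k. real_of_int (avg_form n adj (alpha k) (alpha k))"
  shows "real_of_int (cartan adj i j) = 2 * real_of_int (avg_form n adj (alpha i) (alpha j)) / (sqrt (d i) * sqrt (d j))"
proof -
  let ?M = "real_of_int (avg_form n adj (alpha i) (alpha j))"
  have dpos: "d j > 0" using avg_form_alpha_pos[OF fin j] by (simp add: d_def)
  have e1: "real_of_int (cartan adj i j) * d j = 2 * ?M"
    using ip_alpha_avg_form[OF j, where v="alpha i"] ip_alpha_alpha[OF i j] unfolding d_def
    by (metis of_int_mult of_int_numeral)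
  have e2: "real_of_int (cartan adj i j) * d i = 2 * ?M"
    using ip_alpha_avg_form[OF i, where v="alpha j"] ip_alpha_alpha[OF j i] cartan_sym[OF sld, of j i]
      avg_form_sym[where u="alpha j" and v="alpha i"] unfolding d_def
    by (metis of_int_mult of_int_numeral)
  show ?thesis
  proof (cases "cartan adj i j = 0")
    case True
    then show ?thesis using e1 dpos by simp
  next
    case False
    then have "d i = d j" using e1 e2 by (metis mult_cancel_left of_int_eq_0_iff)
    then have "sqrt (d i) * sqrt (d j) = d j" using dpos by (simp add: real_sqrt_mult[symmetric])
    then show ?thesis using e1 dpos by (simp add: field_simps)
  qed
qed

lemma ip_pos_definite:
  assumes sld: "simply_laced_diagram n adj" and fin: "finite (weyl n adj)"
    and nz: "\<exists>k\<in>{1..n}. v k \<noteq> 0"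
  shows "ip n adj v v > 0"
proof -
  define d where "d k = real_of_int (avg_form n adj (alpha k) (alpha k))" for k
  define M where "M i j = real_of_int (avg_form n adj (alpha i) (alpha j))" for i j
  define u where "u i = real_of_int (v i) / sqrt (d i)" for i
  have dpos: "d i > 0" if "i \<in> {1..n}" for i using avg_form_alpha_pos[OF fin that] by (simp add: d_def)
  have unz: "\<exists>k\<in>{1..n}. u k \<noteq> 0" using nz dpos unfolding u_def by fastforce
  have "real_of_int (ip n adj v v)
      = (\<Sum>i\<in>{1..n}. \<Sum>j\<in>{1..n}. real_of_int (v i) * real_of_int (cartan adj i j) * real_of_int (v j))"
    unfolding ip_def by simp
  also have "\<dots> = (\<Sum>i\<in>{1..n}. \<Sum>j\<in>{1..n}. 2 * (u i * u j * M i j))"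
  proof (intro sum.cong refl)
    fix i j assume ij: "i \<in> {1..n}" "j \<in> {1..n}"
    show "real_of_int (v i) * real_of_int (cartan adj i j) * real_of_int (v j) = 2 * (u i * u j * M i j)"
      using cartan_eq_avg_form_normalized[OF sld fin ij] dpos[OF ij(1)] dpos[OF ij(2)]
      unfolding u_def M_def d_def by (simp add: field_simps)
  qed
  also have "\<dots> = 2 * (\<Sum>i\<in>{1..n}. \<Sum>j\<in>{1..n}. u i * u j * M i j)"
    by (simp add: sum_distrib_left)
  also have "\<dots> > 0" using avg_form_pos_definite[OF fin unz] unfolding M_def by simp
  finally show ?thesis by simp
qed

lemma ip_self_even:
  assumes sld: "simply_laced_diagram n adj"
  shows "even (ip n adj v v)"
proof -
  define f where "f i j = v i * cartan adj i j * v j" for i j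
  have f_sym: "f i j = f j i" for i j
    unfolding f_def using cartan_sym[OF sld, of i j] by (simp add: algebra_simps)
  have "even (\<Sum>i\<in>{1..m}. \<Sum>j\<in>{1..m}. f i j)" for m
  proof (induction m)
    case 0
    then show ?case by simp
  next
    case (Suc m)
    have "(\<Sum>i\<in>{1..Suc m}. \<Sum>j\<in>{1..Suc m}. f i j)
        = f (Suc m) (Suc m) + (\<Sum>j\<in>{1..m}. f (Suc m) j) + (\<Sum>i\<in>{1..m}. f i (Suc m))
          + (\<Sum>i\<in>{1..m}. \<Sum>j\<in>{1..m}. f i j)"
      by (simp add: sum.distrib)
    also have "\<dots> = 2 * (v (Suc m) * v (Suc m) + (\<Sum>j\<in>{1..m}. f (Suc m) j)) + (\<Sum>i\<in>{1..m}. \<Sum>j\<in>{1..m}. f i j)"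
    proof -
      have "(\<Sum>i\<in>{1..m}. f i (Suc m)) = (\<Sum>j\<in>{1..m}. f (Suc m) j)"
        by (intro sum.cong refl) (rule f_sym)
      moreover have "f (Suc m) (Suc m) = 2 * (v (Suc m) * v (Suc m))" by (simp add: f_def cartan_def)
      ultimately show ?thesis by simp
    qed
    finally have split: "(\<Sum>i\<in>{1..Suc m}. \<Sum>j\<in>{1..Suc m}. f i j)
        = 2 * (v (Suc m) * v (Suc m) + (\<Sum>j\<in>{1..m}. f (Suc m) j)) + (\<Sum>i\<in>{1..m}. \<Sum>j\<in>{1..m}. f i j)" .
    show ?case unfolding split using Suc.IH by simp
  qed
  then show ?thesis unfolding ip_def f_def .
qed

lemma ip_self_ge_2:
  assumes sld: "simply_laced_diagram n adj" and fin: "finite (weyl n adj)"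
    and nz: "\<exists>k\<in>{1..n}. v k \<noteq> 0"
  shows "ip n adj v v \<ge> 2"
  using ip_pos_definite[OF sld fin nz] ip_self_even[OF sld, of v] by presburger

lemma ip_self_nonneg:
  assumes sld: "simply_laced_diagram n adj" and fin: "finite (weyl n adj)"
  shows "ip n adj v v \<ge> 0"
  using ip_pos_definite[OF sld fin, of v] ip_vanishing_left[of n v adj v] by fastforce

lemma ip_self_eq_0_vanishing:
  assumes sld: "simply_laced_diagram n adj" and fin: "finite (weyl n adj)"
    and "ip n adj v v = 0"
  shows "\<forall>k\<in>{1..n}. v k = 0"
  using ip_pos_definite[OF sld fin, of v] assms(3) by fastforce

text \<open>Splitting \<open>v\<close> into its positive and negative parts, whose Cartan product is \<open>\<le> 0\<close>
  because off-diagonal Cartan entries are \<open>\<le> 0\<close>.\<close>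

lemma norm2_sign_coherent:
  assumes sld: "simply_laced_diagram n adj" and fin: "finite (weyl n adj)"
    and n2: "ip n adj v v = 2"
  shows "(\<forall>k\<in>{1..n}. v k \<ge> 0) \<or> (\<forall>k\<in>{1..n}. v k \<le> 0)"
proof (rule ccontr)
  assume "\<not> ?thesis"
  then obtain k1 k2 where k: "k1 \<in> {1..n}" "v k1 < 0" "k2 \<in> {1..n}" "v k2 > 0"
    by (auto simp: not_le)
  define p where "p k = max (v k) 0" for k
  define q where "q k = max (- v k) 0" for k
  have vpq: "v = (\<lambda>k. p k - q k)" unfolding p_def q_def by (rule ext) auto
  have pq: "ip n adj p q \<le> 0"
    unfolding ip_def
  proof (intro sum_nonpos)
    fix i j
    have "p i \<ge> 0" "q j \<ge> 0" "i \<noteq> j \<Longrightarrow> cartan adj i j \<le> 0" "p i * q i = 0"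
      unfolding p_def q_def cartan_def by auto
    then show "p i * cartan adj i j * q j \<le> 0"
      by (cases "i = j") (auto simp: mult_nonneg_nonpos mult_nonpos_nonneg mult.commute mult.left_commute)
  qed
  have pp: "ip n adj p p \<ge> 2"
    by (rule ip_self_ge_2[OF sld fin]) (use k in \<open>auto simp: p_def intro!: bexI[of _ k2]\<close>)
  have qq: "ip n adj q q \<ge> 2"
    by (rule ip_self_ge_2[OF sld fin]) (use k in \<open>auto simp: q_def intro!: bexI[of _ k1]\<close>)
  have "ip n adj v v = ip n adj p p + ip n adj q q - 2 * ip n adj p q"
    unfolding vpq by (simp add: ip_diff_left ip_diff_right ip_sym[OF sld, of q p])
  then show False using pp qq pq n2 by linarith
qed

lemma norm2_ht_nonzero:
  assumes sld: "simply_laced_diagram n adj" and fin: "finite (weyl n adj)"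
    and n2: "ip n adj v v = 2"
  shows "ht n v \<noteq> 0"
proof
  assume h0: "ht n v = 0"
  have "\<forall>k\<in>{1..n}. v k = 0"
  proof (cases "\<forall>k\<in>{1..n}. v k \<ge> 0")
    case True
    then show ?thesis using h0 sum_nonneg_eq_0_iff[of "{1..n}" v] unfolding ht_def by auto
  next
    case False
    then have "\<forall>k\<in>{1..n}. v k \<le> 0" using norm2_sign_coherent[OF sld fin n2] by blast
    moreover have "(\<Sum>k\<in>{1..n}. - v k) = 0" using h0 unfolding ht_def by (simp add: sum_negf)
    ultimately show ?thesis using sum_nonneg_eq_0_iff[of "{1..n}" "\<lambda>k. - v k"] by auto
  qed
  then show False using ip_vanishing_left n2 by fastforce
qed

section \<open>Roots\<close>

text \<open>On sets of positive roots \<open>r\<^sub>j\<close> acts through \<open>pos_refl j\<close>, which corrects the sign exactly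
  at \<open>\<alpha>\<^sub>j\<close>, the only positive root that \<open>r\<^sub>j\<close> makes negative (\<open>act_refl_eq_image\<close> below).\<close>

definition pos_refl :: "nat \<Rightarrow> (nat \<Rightarrow> nat \<Rightarrow> bool) \<Rightarrow> nat \<Rightarrow> (nat \<Rightarrow> int) \<Rightarrow> (nat \<Rightarrow> int)" where
  "pos_refl n adj j b = (if b = alpha j then alpha j else refl n adj j b)"

locale spherical_simply_laced =
  fixes n :: nat and adj :: "nat \<Rightarrow> nat \<Rightarrow> bool"
  assumes sld: "simply_laced_diagram n adj" and fin: "finite (weyl n adj)"
begin

abbreviation "IP \<equiv> ip n adj"
abbreviation "R \<equiv> refl n adj"
abbreviation "W \<equiv> weyl n adj"
abbreviation "Phi \<equiv> roots n adj"
abbreviation "Pos \<equiv> pos_roots n adj"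
abbreviation "H \<equiv> ht n"

lemma ip_commute: "IP u v = IP v u" by (rule ip_sym[OF sld])

lemma rootsE:
  assumes "b \<in> Phi"
  obtains w i where "w \<in> W" "i \<in> {1..n}" "b = w (alpha i)"
  using assms unfolding roots_def by blast

lemma ip_root_self: "b \<in> Phi \<Longrightarrow> IP b b = 2"
  by (erule rootsE) (simp add: ip_weyl_invariant[OF sld] ip_alpha_self)

lemma root_supported: "b \<in> Phi \<Longrightarrow> supported n b"
  by (erule rootsE) (simp add: supported_weyl supported_alpha)

lemma alpha_root: "i \<in> {1..n} \<Longrightarrow> alpha i \<in> Phi"
  unfolding roots_def by (rule CollectI, rule exI[of _ id], rule exI[of _ i]) (simp add: weyl.weyl_id)

lemma weyl_root:
  assumes w: "w \<in> W" and b: "b \<in> Phi"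
  shows "w b \<in> Phi"
proof -
  obtain v i where "v \<in> W" "i \<in> {1..n}" "b = v (alpha i)" using b by (rule rootsE)
  then show ?thesis unfolding roots_def using weyl_comp_closed[OF w \<open>v \<in> W\<close>]
    by (intro CollectI exI[of _ "w \<circ> v"] exI[of _ i]) simp
qed

lemma refl_root: "j \<in> {1..n} \<Longrightarrow> b \<in> Phi \<Longrightarrow> R j b \<in> Phi"
  using weyl_root[OF refl_in_weyl] by blast

lemma uminus_root:
  assumes "b \<in> Phi"
  shows "(\<lambda>k. - b k) \<in> Phi"
proof -
  obtain w i where wi: "w \<in> W" "i \<in> {1..n}" "b = w (alpha i)" using assms by (rule rootsE)
  have "(\<lambda>k. - b k) = w (R i (alpha i))"
    using wi by (simp add: refl_alpha_self weyl_uminus)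
  then show ?thesis using weyl_root[OF wi(1) refl_root[OF wi(2) alpha_root[OF wi(2)]]] by simp
qed

lemma roots_finite: "finite Phi"
proof -
  have "Phi \<subseteq> (\<lambda>(w,i). w (alpha i)) ` (W \<times> {1..n})"
  proof
    fix x assume "x \<in> Phi"
    then obtain w i where "w \<in> W" "i \<in> {1..n}" "x = w (alpha i)" by (rule rootsE)
    then show "x \<in> (\<lambda>(w,i). w (alpha i)) ` (W \<times> {1..n})" by (intro image_eqI[where x="(w,i)"]) auto
  qed
  then show ?thesis using fin by (meson finite_SigmaI finite_atLeastAtMost finite_imageI finite_subset)
qed

lemma pos_roots_finite: "finite Pos"
  using roots_finite unfolding pos_roots_def by simp

lemma root_pos_or_uminus_pos:
  assumes b: "b \<in> Phi"
  shows "b \<in> Pos \<or> (\<lambda>k. - b k) \<in> Pos"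
proof -
  have s: "supported n b" by (rule root_supported[OF b])
  from norm2_sign_coherent[OF sld fin ip_root_self[OF b]]
  show ?thesis
  proof
    assume "\<forall>k\<in>{1..n}. 0 \<le> b k"
    then have "\<forall>k. 0 \<le> b k" using s unfolding supported_def by (metis order_refl)
    then show ?thesis using b unfolding pos_roots_def by auto
  next
    assume "\<forall>k\<in>{1..n}. b k \<le> 0"
    then have "\<forall>k. 0 \<le> - b k" using s unfolding supported_def by (metis neg_0_le_iff_le order_refl)
    then show ?thesis using uminus_root[OF b] unfolding pos_roots_def by auto
  qed
qed

lemma pos_root: "b \<in> Pos \<Longrightarrow> b \<in> Phi"
  unfolding pos_roots_def by simp

lemma pos_nonneg: "b \<in> Pos \<Longrightarrow> 0 \<le> b k"
  unfolding pos_roots_def by simp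

lemma pos_root_coeff_pos:
  assumes "b \<in> Pos"
  shows "\<exists>k\<in>{1..n}. b k > 0"
proof (rule ccontr)
  assume "\<not> ?thesis"
  then have "\<forall>k\<in>{1..n}. b k = 0" using pos_nonneg[OF assms] by (metis antisym not_le)
  then have "IP b b = 0" by (rule ip_vanishing_left)
  then show False using ip_root_self[OF pos_root[OF assms]] by simp
qed

lemma pos_root_ht_ge_1:
  assumes "b \<in> Pos"
  shows "H b \<ge> 1"
proof -
  obtain k where k: "k \<in> {1..n}" "b k > 0" using pos_root_coeff_pos[OF assms] by blast
  have "b k \<le> H b" unfolding ht_def by (rule member_le_sum) (use k pos_nonneg[OF assms] in auto)
  then show ?thesis using k by linarith
qed

lemma uminus_pos_root_not_pos: "b \<in> Pos \<Longrightarrow> (\<lambda>k. - b k) \<notin> Pos"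
proof
  assume b: "b \<in> Pos" and nb: "(\<lambda>k. - b k) \<in> Pos"
  obtain k where "b k > 0" using pos_root_coeff_pos[OF b] by blast
  moreover have "0 \<le> - b k" using pos_nonneg[OF nb, of k] by simp
  ultimately show False by simp
qed

lemma ip_roots_bounds:
  assumes "b \<in> Phi" "c \<in> Phi"
  shows "IP b c \<le> 2" "IP b c \<ge> -2"
proof -
  have "IP (\<lambda>k. b k - c k) (\<lambda>k. b k - c k) \<ge> 0" by (rule ip_self_nonneg[OF sld fin])
  then show "IP b c \<le> 2" using ip_root_self[OF assms(1)] ip_root_self[OF assms(2)] ip_commute[of c b]
    by (simp add: ip_diff_left ip_diff_right)
  have "IP (\<lambda>k. b k + c k) (\<lambda>k. b k + c k) \<ge> 0" by (rule ip_self_nonneg[OF sld fin])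
  then show "IP b c \<ge> -2" using ip_root_self[OF assms(1)] ip_root_self[OF assms(2)] ip_commute[of c b]
    by (simp add: ip_add_left ip_add_right)
qed

lemma roots_eq_if_ip_2:
  assumes "b \<in> Phi" "c \<in> Phi" "IP b c = 2"
  shows "b = c"
proof -
  have "IP (\<lambda>k. b k - c k) (\<lambda>k. b k - c k) = 0"
    using ip_root_self[OF assms(1)] ip_root_self[OF assms(2)] ip_commute[of c b] assms(3)
    by (simp add: ip_diff_left ip_diff_right)
  then have "\<forall>k\<in>{1..n}. b k - c k = 0" by (rule ip_self_eq_0_vanishing[OF sld fin])
  then show ?thesis using root_supported[OF assms(1)] root_supported[OF assms(2)] by (intro supported_eqI) auto
qed

lemma roots_uminus_if_ip_neg_2:
  assumes "b \<in> Phi" "c \<in> Phi" "IP b c = -2"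
  shows "b = (\<lambda>k. - c k)"
proof -
  have "IP b (\<lambda>k. - c k) = 2" using assms(3) by (simp add: ip_uminus_right)
  then show ?thesis using roots_eq_if_ip_2[OF assms(1) uminus_root[OF assms(2)]] by blast
qed

lemma pos_root_ip_alpha_cases:
  assumes b: "b \<in> Pos" and j: "j \<in> {1..n}"
  shows "IP b (alpha j) \<in> {-1, 0, 1} \<or> b = alpha j"
proof -
  have r: "b \<in> Phi" "alpha j \<in> Phi" using pos_root[OF b] alpha_root[OF j] by auto
  have "IP b (alpha j) \<noteq> -2"
  proof
    assume "IP b (alpha j) = -2"
    then have "b = (\<lambda>k. - alpha j k)" using roots_uminus_if_ip_neg_2[OF r] by blast
    then have "b j = -1" by (simp add: alpha_def)
    then show False using pos_nonneg[OF b, of j] by simp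
  qed
  moreover have "IP b (alpha j) = 2 \<Longrightarrow> b = alpha j" using roots_eq_if_ip_2[OF r] by blast
  ultimately show ?thesis using ip_roots_bounds[OF r] by force
qed

lemma refl_pos_root:
  assumes b: "b \<in> Pos" and j: "j \<in> {1..n}" and ne: "b \<noteq> alpha j"
  shows "R j b \<in> Pos"
proof (rule ccontr)
  assume nP: "R j b \<notin> Pos"
  have rb: "R j b \<in> Phi" by (rule refl_root[OF j pos_root[OF b]])
  then have np: "(\<lambda>k. - R j b k) \<in> Pos" using root_pos_or_uminus_pos nP by blast
  have other: "b k = 0" if "k \<noteq> j" for k
  proof -
    have "R j b k = b k" using that unfolding refl_def alpha_def by simp
    then show ?thesis using pos_nonneg[OF np, of k] pos_nonneg[OF b, of k] by simp
  qed
  have beq: "b = (\<lambda>k. b j * alpha j k)"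
    by (rule ext) (auto simp: alpha_def other)
  have "IP b b = b j * b j * 2"
    by (subst (1 2) beq) (simp add: ip_scale_left ip_scale_right ip_alpha_self[OF j])
  then have "b j * b j = 1" using ip_root_self[OF pos_root[OF b]] by simp
  moreover have "b j \<ge> 0" by (rule pos_nonneg[OF b])
  ultimately have "b j = 1" using square_eq_1_iff[of "b j"] by auto
  then have "b = alpha j" using beq by simp
  then show False using ne by simp
qed

lemma alpha_pos_root: "j \<in> {1..n} \<Longrightarrow> alpha j \<in> Pos"
  using alpha_root unfolding pos_roots_def alpha_def by auto

lemma pos_root_ip_alpha_eq_2_iff:
  assumes "b \<in> Pos" "j \<in> {1..n}"
  shows "(IP b (alpha j) = 2) = (b = alpha j)"
proof (rule iffI)
  assume "IP b (alpha j) = 2"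
  then show "b = alpha j" using roots_eq_if_ip_2[OF pos_root[OF assms(1)] alpha_root[OF assms(2)]] by simp
next
  assume "b = alpha j"
  then show "IP b (alpha j) = 2" using ip_alpha_self[OF assms(2)] by simp
qed

lemma pos_refl_pos_root: "b \<in> Pos \<Longrightarrow> j \<in> {1..n} \<Longrightarrow> pos_refl n adj j b \<in> Pos"
  unfolding pos_refl_def using refl_pos_root[of b j] alpha_pos_root[of j] by (cases "b = alpha j") simp_all

lemma ip_pos_refl_alpha:
  assumes "b \<in> Pos" "j \<in> {1..n}" "l \<in> {1..n}"
  shows "IP (pos_refl n adj j b) (alpha l)
    = (if IP b (alpha j) = 2 then IP b (alpha l) else IP b (alpha l) - IP b (alpha j) * IP (alpha j) (alpha l))"
proof (cases "b = alpha j")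
  case True
  then show ?thesis using pos_root_ip_alpha_eq_2_iff[OF assms(1,2)] by (simp add: pos_refl_def)
next
  case False
  then have "IP b (alpha j) \<noteq> 2" using pos_root_ip_alpha_eq_2_iff[OF assms(1,2)] by simp
  then show ?thesis using False unfolding pos_refl_def refl_def by (simp add: ip_diff_scale_left)
qed

lemma ht_pos_refl:
  assumes "b \<in> Pos" "j \<in> {1..n}"
  shows "H (pos_refl n adj j b) = (if IP b (alpha j) = 2 then H b else H b - IP b (alpha j))"
proof (cases "b = alpha j")
  case True
  then show ?thesis using pos_root_ip_alpha_eq_2_iff[OF assms(1,2)] by (simp add: pos_refl_def)
next
  case False
  then have "IP b (alpha j) \<noteq> 2" using pos_root_ip_alpha_eq_2_iff[OF assms(1,2)] by simp
  then show ?thesis using False unfolding pos_refl_def by (simp add: ht_refl[OF assms(2)])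
qed

lemma pos_refl_pos_refl:
  assumes "b \<in> Pos" "j \<in> {1..n}"
  shows "pos_refl n adj j (pos_refl n adj j b) = b"
proof (cases "b = alpha j")
  case False
  have "R j b \<noteq> alpha j"
  proof
    assume "R j b = alpha j"
    then have "b = (\<lambda>k. - alpha j k)" using refl_refl[OF assms(2)] refl_alpha_self[OF assms(2)] by metis
    then show False using uminus_pos_root_not_pos[OF alpha_pos_root[OF assms(2)]] assms(1) by simp
  qed
  then show ?thesis using False refl_refl[OF assms(2)] by (simp add: pos_refl_def)
qed (simp add: pos_refl_def)

lemma pos_refl_iff:
  assumes b: "b \<in> Pos" and j: "j \<in> {1..n}" and x: "x \<in> Pos"
  shows "x = R j b \<or> x = (\<lambda>k. - R j b k) \<longleftrightarrow> x = pos_refl n adj j b"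
proof (cases "b = alpha j")
  case True
  then show ?thesis
    using x uminus_pos_root_not_pos[OF alpha_pos_root[OF j]] by (auto simp: pos_refl_def refl_alpha_self[OF j])
next
  case False
  then show ?thesis
    using x uminus_pos_root_not_pos[OF refl_pos_root[OF b j False]] by (auto simp: pos_refl_def)
qed

lemma act_mem_iff: "x \<in> act n adj g B \<longleftrightarrow> x \<in> Pos \<and> (\<exists>b\<in>B. x = g b \<or> x = (\<lambda>k. - g b k))"
  unfolding act_def by (simp add: fun_Compl_def)

lemma act_refl_eq_image:
  assumes "B \<subseteq> Pos" "j \<in> {1..n}"
  shows "act n adj (R j) B = pos_refl n adj j ` B"
proof (rule set_eqI)
  fix x
  have "x \<in> act n adj (R j) B \<longleftrightarrow> (\<exists>b\<in>B. x \<in> Pos \<and> (x = R j b \<or> x = (\<lambda>k. - R j b k)))"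
    by (auto simp: act_mem_iff)
  also have "\<dots> \<longleftrightarrow> (\<exists>b\<in>B. x = pos_refl n adj j b)"
    using assms pos_refl_iff pos_refl_pos_root by blast
  finally show "x \<in> act n adj (R j) B \<longleftrightarrow> x \<in> pos_refl n adj j ` B" by blast
qed

end

lemma ip_self_diff_scale:
  assumes "simply_laced_diagram n adj"
  shows "ip n adj (\<lambda>k. u k - c * a k) (\<lambda>k. u k - c * a k)
    = ip n adj u u - 2 * c * ip n adj u a + c * c * ip n adj a a"
  by (simp add: ip_diff_scale_left ip_diff_scale_right ip_sym[OF assms, of a u] algebra_simps)

lemma ip_self_pair_combination:
  assumes sld: "simply_laced_diagram n adj" and i: "i \<in> {1..n}" and j: "j \<in> {1..n}"
  shows "ip n adj (\<lambda>k. s k - t k - x * alpha i k - y * alpha j k) (\<lambda>k. s k - t k - x * alpha i k - y * alpha j k)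
    = ip n adj s s + ip n adj t t - 2 * ip n adj s t - 2 * x * ip n adj s (alpha i) - 2 * y * ip n adj s (alpha j)
      + 2 * x * ip n adj t (alpha i) + 2 * y * ip n adj t (alpha j) + 2 * x * x + 2 * y * y
      + 2 * x * y * ip n adj (alpha i) (alpha j)"
proof -
  let ?s_t = "\<lambda>k. s k - t k" and ?s_t_x = "\<lambda>k. s k - t k - x * alpha i k"
  have e1: "ip n adj (\<lambda>k. ?s_t_x k - y * alpha j k) (\<lambda>k. ?s_t_x k - y * alpha j k)
     = ip n adj ?s_t_x ?s_t_x - 2 * y * ip n adj ?s_t_x (alpha j) + y * y * 2"
    using ip_self_diff_scale[OF sld, of ?s_t_x y "alpha j"] ip_alpha_self[OF j] by simp
  have e2: "ip n adj ?s_t_x ?s_t_x = ip n adj ?s_t ?s_t - 2 * x * ip n adj ?s_t (alpha i) + x * x * 2"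
    using ip_self_diff_scale[OF sld, of ?s_t x "alpha i"] ip_alpha_self[OF i] by simp
  have e3: "ip n adj ?s_t_x (alpha j) = ip n adj s (alpha j) - ip n adj t (alpha j) - x * ip n adj (alpha i) (alpha j)"
    by (simp only: ip_diff_scale_left ip_diff_left)
  have e4: "ip n adj ?s_t (alpha i) = ip n adj s (alpha i) - ip n adj t (alpha i)"
    by (rule ip_diff_left)
  have e5: "ip n adj ?s_t ?s_t = ip n adj s s - 2 * ip n adj s t + ip n adj t t"
    using ip_self_diff_scale[OF sld, of s 1 t] by simp
  show ?thesis unfolding e1 e2 e3 e4 e5 by (simp add: algebra_simps)
qed

lemma ht_pair_combination:
  assumes i: "i \<in> {1..n}" and j: "j \<in> {1..n}"
  shows "ht n (\<lambda>k. s k - t k - x * alpha i k - y * alpha j k) = ht n s - ht n t - x - y"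
  by (simp add: ht_diff_scale ht_diff ht_alpha[OF i] ht_alpha[OF j])

context spherical_simply_laced
begin

text \<open>All constraints between the heights of two roots used below are instances of this one.\<close>

lemma ht_pair_combination_nonzero:
  assumes i: "i \<in> {1..n}" and j: "j \<in> {1..n}"
    and n2: "IP s s + IP t t - 2 * IP s t - 2 * x * IP s (alpha i) - 2 * y * IP s (alpha j)
      + 2 * x * IP t (alpha i) + 2 * y * IP t (alpha j) + 2 * x * x + 2 * y * y
      + 2 * x * y * IP (alpha i) (alpha j) = 2"
  shows "H s - H t - x - y \<noteq> 0"
  using norm2_ht_nonzero[OF sld fin, of "\<lambda>k. s k - t k - x * alpha i k - y * alpha j k"]
  unfolding ip_self_pair_combination[OF sld i j] ht_pair_combination[OF i j] using n2 by simp

lemma orth_roots_ht_gap: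
  assumes j: "j \<in> {1..n}" and a: "a \<in> Phi" and b: "b \<in> Phi" and ab: "IP b a = 0"
    and pa: "IP a (alpha j) = -1" and pb: "IP b (alpha j) = 1"
  shows "H b \<noteq> H a + 1"
  using ht_pair_combination_nonzero[OF j j, of b a 0 1] ip_root_self[OF a] ip_root_self[OF b] ab pa pb
    ip_alpha_self[OF j]
  by simp

lemma orth_roots_eq_add_alphas:
  assumes i: "i \<in> {1..n}" and j: "j \<in> {1..n}" and c: "IP (alpha i) (alpha j) = 0"
    and s: "s \<in> Phi" and t: "t \<in> Phi" and st: "IP s t = 0"
    and "IP s (alpha i) = 1" "IP s (alpha j) = 1" "IP t (alpha i) = -1" "IP t (alpha j) = -1"
  shows "s = (\<lambda>k. t k + alpha i k + alpha j k)"
proof -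
  have "IP (\<lambda>k. s k - t k - 1 * alpha i k - 1 * alpha j k) (\<lambda>k. s k - t k - 1 * alpha i k - 1 * alpha j k) = 0"
    unfolding ip_self_pair_combination[OF sld i j] using assms ip_root_self[OF s] ip_root_self[OF t] by simp
  then have "\<forall>k\<in>{1..n}. s k = t k + alpha i k + alpha j k"
    using ip_self_eq_0_vanishing[OF sld fin] by fastforce
  moreover have "supported n (\<lambda>k. t k + alpha i k + alpha j k)"
    using root_supported[OF t] supported_alpha[OF i] supported_alpha[OF j] unfolding supported_def by simp
  ultimately show ?thesis using supported_eqI root_supported[OF s] by blast
qed

section \<open>The Weyl group action on orthogonal sets\<close>

lemma act_comp:
  assumes B: "B \<subseteq> Phi" and g: "g \<in> W" and w: "w \<in> W"
  shows "act n adj g (act n adj w B) = act n adj (g \<circ> w) B"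
proof -
  have g_uminus: "g (\<lambda>k. - v k) = (\<lambda>k. - g v k)" for v
    by (rule weyl_uminus[OF g])
  have "(\<exists>d\<in>act n adj w B. x = g d \<or> x = (\<lambda>k. - g d k)) \<longleftrightarrow> (\<exists>b\<in>B. x = g (w b) \<or> x = (\<lambda>k. - g (w b) k))"
    for x
  proof
    assume "\<exists>d\<in>act n adj w B. x = g d \<or> x = (\<lambda>k. - g d k)"
    then obtain d where d: "d \<in> act n adj w B" "x = g d \<or> x = (\<lambda>k. - g d k)" by blast
    then obtain b where "b \<in> B" "d = w b \<or> d = (\<lambda>k. - w b k)" using act_mem_iff by blast
    with d(2) show "\<exists>b\<in>B. x = g (w b) \<or> x = (\<lambda>k. - g (w b) k)"
      by (auto simp: g_uminus)
  next
    assume "\<exists>b\<in>B. x = g (w b) \<or> x = (\<lambda>k. - g (w b) k)"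
    then obtain b where b: "b \<in> B" "x = g (w b) \<or> x = (\<lambda>k. - g (w b) k)" by blast
    from root_pos_or_uminus_pos[OF weyl_root[OF w subsetD[OF B b(1)]]]
    consider "w b \<in> Pos" | "(\<lambda>k. - w b k) \<in> Pos" by blast
    then show "\<exists>d\<in>act n adj w B. x = g d \<or> x = (\<lambda>k. - g d k)"
    proof cases
      case 1
      then have "w b \<in> act n adj w B" using b(1) by (auto simp: act_mem_iff)
      then show ?thesis using b(2) by blast
    next
      case 2
      then have d: "(\<lambda>k. - w b k) \<in> act n adj w B" using b(1) by (auto simp: act_mem_iff)
      show ?thesis using b(2) by (intro bexI[OF _ d]) (auto simp: g_uminus)
    qed
  qed
  then show ?thesis by (auto simp: act_mem_iff[of _ g] act_mem_iff[of _ "g \<circ> w"])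
qed

text \<open>For adjacent nodes both sides are the reflection in \<open>\<alpha>\<^sub>i + \<alpha>\<^sub>j\<close>.\<close>

lemma refl_braid:
  assumes "adj i j"
  shows "R i \<circ> R j \<circ> R i = R j \<circ> R i \<circ> R j"
proof -
  have ij: "i \<in> {1..n}" "j \<in> {1..n}" "IP (alpha i) (alpha j) = -1" "IP (alpha j) (alpha i) = -1"
    using assms sld by (auto simp: simply_laced_diagram_def ip_alpha_alpha cartan_def)
  have braid: "R x (R y (R x v)) = (\<lambda>k. v k - (IP v (alpha x) + IP v (alpha y)) * (alpha x k + alpha y k))"
    if x: "x \<in> {1..n}" and cxy: "IP (alpha x) (alpha y) = -1" and cyx: "IP (alpha y) (alpha x) = -1"
    for x y v
  proof -
    have p1: "IP (R x v) (alpha y) = IP v (alpha y) + IP v (alpha x)"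
      using ip_refl_alpha[of n adj x v y] cxy by simp
    have p2: "IP (R y (R x v)) (alpha x) = IP v (alpha y)"
      using ip_refl_alpha[of n adj y "R x v" x] ip_refl_alpha[of n adj x v x] ip_alpha_self[OF x] p1 cyx by simp
    show ?thesis
      unfolding refl_def[of n adj x "R y (R x v)"] p2
      unfolding refl_def[of n adj y "R x v"] p1
      unfolding refl_def[of n adj x v]
      by (rule ext) (simp add: algebra_simps)
  qed
  have "R i (R j (R i v)) = R j (R i (R j v))" for v
    using braid[OF ij(1,3,4)] braid[OF ij(2,4,3)] by (simp add: add.commute)
  then show ?thesis by (simp add: fun_eq_iff)
qed

lemma refl_commute:
  assumes "i \<in> {1..n}" "j \<in> {1..n}" "\<not> adj i j"
  shows "R i \<circ> R j = R j \<circ> R i"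
proof (cases "i = j")
  case False
  then have c: "IP (alpha i) (alpha j) = 0" "IP (alpha j) (alpha i) = 0"
    using assms sld by (auto simp: simply_laced_diagram_def ip_alpha_alpha cartan_def)
  have "R i (R j v) = R j (R i v)" for v
    using ip_refl_alpha[of n adj j v i] ip_refl_alpha[of n adj i v j] c
    unfolding refl_def[of n adj i "R j v"] refl_def[of n adj j "R i v"]
    unfolding refl_def[of n adj i v] refl_def[of n adj j v]
    by (simp add: fun_eq_iff algebra_simps)
  then show ?thesis by (simp add: fun_eq_iff)
qed simp

end

locale orthogonal_orbit = spherical_simply_laced +
  fixes B1 :: "(nat \<Rightarrow> int) set"
  assumes base: "orth_pos_set n adj B1"
begin

abbreviation "Orb \<equiv> {act n adj w B1 | w. w \<in> W}"

lemma orbit_pos: "B \<in> Orb \<Longrightarrow> B \<subseteq> Pos"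
  using act_mem_iff by blast

lemma orbit_finite: "B \<in> Orb \<Longrightarrow> finite B"
  using orbit_pos pos_roots_finite by (rule finite_subset)

lemma act_comp_orbit:
  assumes "B \<in> Orb" "g \<in> W" "h \<in> W"
  shows "act n adj g (act n adj h B) = act n adj (g \<circ> h) B"
  using act_comp[OF _ assms(2,3)] orbit_pos[OF assms(1)] pos_root by blast

lemma orbit_act_closed:
  assumes "B \<in> Orb" "g \<in> W"
  shows "act n adj g B \<in> Orb"
proof -
  obtain w where w: "w \<in> W" "B = act n adj w B1" using assms(1) by blast
  have "B1 \<subseteq> Phi" using base pos_root unfolding orth_pos_set_def by blast
  then have "act n adj g B = act n adj (g \<circ> w) B1" using act_comp[OF _ assms(2) w(1)] w(2) by simp
  then show ?thesis using weyl_comp_closed[OF assms(2) w(1)] by blast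
qed

lemma orbit_refl_closed: "B \<in> Orb \<Longrightarrow> j \<in> {1..n} \<Longrightarrow> act n adj (R j) B \<in> Orb"
  using orbit_act_closed refl_in_weyl by blast

lemma act_refl_involutive:
  assumes "B \<in> Orb" "j \<in> {1..n}"
  shows "act n adj (R j) (act n adj (R j) B) = B"
proof -
  have "act n adj (R j) (act n adj (R j) B) = pos_refl n adj j ` pos_refl n adj j ` B"
    using act_refl_eq_image[OF orbit_pos[OF assms(1)] assms(2)]
      act_refl_eq_image[OF orbit_pos[OF orbit_refl_closed[OF assms]] assms(2)] by simp
  also have "\<dots> = B"
    using pos_refl_pos_refl[OF subsetD[OF orbit_pos[OF assms(1)]] assms(2)] by (simp add: image_image)
  finally show ?thesis .
qed

lemma orbit_orth:
  assumes "B \<in> Orb" "x \<in> B" "y \<in> B" "x \<noteq> y"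
  shows "IP x y = 0"
proof -
  obtain w where w: "w \<in> W" "B = act n adj w B1" using assms(1) by blast
  obtain b where b: "b \<in> B1" "x = w b \<or> x = (\<lambda>k. - w b k)"
    using assms(2) unfolding w(2) act_mem_iff by blast
  obtain c where c: "c \<in> B1" "y = w c \<or> y = (\<lambda>k. - w c k)"
    using assms(3) unfolding w(2) act_mem_iff by blast
  have "b \<noteq> c"
  proof
    assume "b = c"
    then have "x = y \<or> x = (\<lambda>k. - y k)" using b(2) c(2) by auto
    then show False using assms uminus_pos_root_not_pos orbit_pos by blast
  qed
  then have "IP b c = 0" using base b(1) c(1) unfolding orth_pos_set_def by blast
  then have "IP (w b) (w c) = 0" using ip_weyl_invariant[OF sld w(1)] by simp
  then show ?thesis using b(2) c(2) by (auto simp: ip_uminus_left ip_uminus_right)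
qed

end

section \<open>Ascending reflections\<close>

text \<open>\<open>ascent j B\<close> is the local form of \<open>B \<prec> r\<^sub>j B\<close> (\<open>prec_refl_iff_ascent\<close>): some root that \<open>r\<^sub>j\<close>
  lowers is lower than every root that \<open>r\<^sub>j\<close> raises.\<close>

definition ascent :: "nat \<Rightarrow> (nat \<Rightarrow> nat \<Rightarrow> bool) \<Rightarrow> nat \<Rightarrow> (nat \<Rightarrow> int) set \<Rightarrow> bool" where
  "ascent n adj j B \<longleftrightarrow> (\<exists>b\<in>B. ip n adj b (alpha j) = -1 \<and>
      (\<forall>d\<in>B. ip n adj d (alpha j) = 1 \<longrightarrow> ht n b < ht n d))"

definition refl_moved :: "nat \<Rightarrow> (nat \<Rightarrow> nat \<Rightarrow> bool) \<Rightarrow> nat \<Rightarrow> (nat \<Rightarrow> int) set \<Rightarrow> (nat \<Rightarrow> int) set" where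
  "refl_moved n adj j B = {b\<in>B. ip n adj b (alpha j) = 1 \<or> ip n adj b (alpha j) = -1}"

lemma Min_image_less_Min_image_iff:
  fixes f :: "'a \<Rightarrow> 'b::linorder"
  assumes "finite A" "A \<noteq> {}" "finite A'" "A' \<noteq> {}"
  shows "Min (f ` A) < Min (f ` A') \<longleftrightarrow> (\<exists>a\<in>A. \<forall>b\<in>A'. f a < f b)"
  using assms by (subst Min_less_iff) auto

lemma finite_ex_min:
  fixes f :: "'a \<Rightarrow> 'b::linorder"
  assumes "finite A" "A \<noteq> {}"
  obtains a where "a \<in> A" "\<forall>b\<in>A. f a \<le> f b"
  using ex_is_arg_min_if_finite[OF assms, of f] unfolding is_arg_min_def by (auto simp: not_less)

context orthogonal_orbit
begin

lemma refl_moved_notin: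
  assumes B: "B \<in> Orb" and b: "b \<in> refl_moved n adj j B"
  shows "R j b \<notin> B"
proof
  assume Rb: "R j b \<in> B"
  have b_in: "b \<in> B" and moved: "IP b (alpha j) = 1 \<or> IP b (alpha j) = -1"
    using b unfolding refl_moved_def by auto
  have "R j b \<noteq> b" using moved ip_alpha_eq_0_if_refl_fixed by force
  moreover have "IP b (R j b) = 1"
    using moved ip_root_self[OF pos_root[OF subsetD[OF orbit_pos[OF B] b_in]]]
    unfolding refl_def by (auto simp: ip_diff_scale_right)
  ultimately show False using orbit_orth[OF B b_in Rb] by simp
qed

lemma pos_refl_eq_self:
  assumes "b \<in> B" "B \<subseteq> Pos" "j \<in> {1..n}" "b \<notin> refl_moved n adj j B"
  shows "pos_refl n adj j b = b"
  using pos_root_ip_alpha_cases[OF subsetD[OF assms(2,1)] assms(3)] assms(1,4) refl_eq_self_if_orth[of n adj b j]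
  unfolding pos_refl_def refl_moved_def by auto

lemma pos_refl_mem_iff:
  assumes B: "B \<in> Orb" and j: "j \<in> {1..n}" and b: "b \<in> B"
  shows "pos_refl n adj j b \<in> B \<longleftrightarrow> b \<notin> refl_moved n adj j B"
proof
  assume "pos_refl n adj j b \<in> B"
  moreover have "b \<noteq> alpha j" if "b \<in> refl_moved n adj j B"
    using that ip_alpha_self[OF j] unfolding refl_moved_def by auto
  ultimately show "b \<notin> refl_moved n adj j B"
    using refl_moved_notin[OF B] unfolding pos_refl_def by auto
next
  assume "b \<notin> refl_moved n adj j B"
  then show "pos_refl n adj j b \<in> B"
    using pos_refl_eq_self[OF b orbit_pos[OF B] j] b by simp
qed

lemma mem_pos_refl_image_iff:
  assumes B: "B \<in> Orb" and j: "j \<in> {1..n}" and b: "b \<in> B"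
  shows "b \<in> pos_refl n adj j ` B \<longleftrightarrow> b \<notin> refl_moved n adj j B"
proof
  assume "b \<in> pos_refl n adj j ` B"
  then obtain c where c: "c \<in> B" "b = pos_refl n adj j c" by blast
  show "b \<notin> refl_moved n adj j B"
  proof (cases "c = alpha j")
    case True
    then show ?thesis using c(2) ip_alpha_self[OF j] by (simp add: pos_refl_def refl_moved_def)
  next
    case False
    then have "R j b = c" using c(2) refl_refl[OF j] by (simp add: pos_refl_def)
    then show ?thesis using refl_moved_notin[OF B, of b j] c(1) by auto
  qed
next
  assume "b \<notin> refl_moved n adj j B"
  then show "b \<in> pos_refl n adj j ` B"
    using pos_refl_eq_self[OF b orbit_pos[OF B] j] b by (metis image_eqI)
qed

lemma orbit_diff_act_refl:
  assumes B: "B \<in> Orb" and j: "j \<in> {1..n}"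
  shows "B - act n adj (R j) B = refl_moved n adj j B"
    and "act n adj (R j) B - B = pos_refl n adj j ` refl_moved n adj j B"
proof -
  have moved_sub: "refl_moved n adj j B \<subseteq> B" unfolding refl_moved_def by blast
  show "B - act n adj (R j) B = refl_moved n adj j B"
    unfolding act_refl_eq_image[OF orbit_pos[OF B] j] using mem_pos_refl_image_iff[OF B j] moved_sub by blast
  show "act n adj (R j) B - B = pos_refl n adj j ` refl_moved n adj j B"
    unfolding act_refl_eq_image[OF orbit_pos[OF B] j] using pos_refl_mem_iff[OF B j] moved_sub by blast
qed

lemma act_refl_eq_self_iff:
  assumes B: "B \<in> Orb" and j: "j \<in> {1..n}"
  shows "act n adj (R j) B = B \<longleftrightarrow> refl_moved n adj j B = {}"
  using orbit_diff_act_refl[OF B j] by auto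

lemma prec_act_refl_iff:
  assumes B: "B \<in> Orb" and j: "j \<in> {1..n}"
  shows "prec n B (act n adj (R j) B)
    \<longleftrightarrow> (\<exists>a\<in>refl_moved n adj j B. \<forall>b\<in>refl_moved n adj j B. H a < H b - IP b (alpha j))"
proof -
  define C where "C = act n adj (R j) B"
  define M where "M = refl_moved n adj j B"
  have finM: "finite M" using orbit_finite[OF B] unfolding M_def refl_moved_def by simp
  have BC: "B - C = M" and CB: "C - B = pos_refl n adj j ` M"
    unfolding C_def M_def by (rule orbit_diff_act_refl[OF B j])+
  have ht_C: "H (pos_refl n adj j b) = H b - IP b (alpha j)" if "b \<in> M" for b
    using that ht_pos_refl[OF _ j, of b] orbit_pos[OF B] unfolding M_def refl_moved_def by auto
  show ?thesis
  proof (cases "M = {}")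
    case True
    then show ?thesis unfolding prec_def C_def[symmetric] M_def[symmetric] using BC CB by auto
  next
    case False
    have "Min (H ` (B - C)) < Min (H ` (C - B)) \<longleftrightarrow> (\<exists>a\<in>M. \<forall>c\<in>pos_refl n adj j ` M. H a < H c)"
      unfolding BC CB by (rule Min_image_less_Min_image_iff) (use finM False in auto)
    also have "\<dots> \<longleftrightarrow> (\<exists>a\<in>M. \<forall>b\<in>M. H a < H b - IP b (alpha j))" using ht_C by auto
    finally show ?thesis unfolding prec_def C_def[symmetric] M_def[symmetric] using BC False by auto
  qed
qed

text \<open>The roots moved by \<open>r\<^sub>j\<close> change height by \<open>\<mp>1\<close>, and \<open>orth_roots_ht_gap\<close> rules out ties
  between a root going down and a root going up: this turns the comparison of minimal heights into
  the local criterion \<open>ascent\<close>.\<close>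

lemma moved_ht_criterion_iff_ascent:
  assumes B: "B \<in> Orb" and j: "j \<in> {1..n}"
  shows "(\<exists>a\<in>refl_moved n adj j B. \<forall>b\<in>refl_moved n adj j B. H a < H b - IP b (alpha j))
    \<longleftrightarrow> ascent n adj j B"
proof
  assume "\<exists>a\<in>refl_moved n adj j B. \<forall>b\<in>refl_moved n adj j B. H a < H b - IP b (alpha j)"
  then obtain a where a: "a \<in> refl_moved n adj j B" "\<forall>b\<in>refl_moved n adj j B. H a < H b - IP b (alpha j)"
    by blast
  have "IP a (alpha j) = -1" using a unfolding refl_moved_def by auto
  moreover have "\<forall>d\<in>B. IP d (alpha j) = 1 \<longrightarrow> H a < H d" using a unfolding refl_moved_def by force
  ultimately show "ascent n adj j B" unfolding ascent_def using a(1) unfolding refl_moved_def by blast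
next
  assume "ascent n adj j B"
  then obtain b0 where b0: "b0 \<in> B" "IP b0 (alpha j) = -1" "\<forall>d\<in>B. IP d (alpha j) = 1 \<longrightarrow> H b0 < H d"
    unfolding ascent_def by blast
  define N where "N = {b\<in>B. IP b (alpha j) = -1}"
  have "finite N" "N \<noteq> {}" using orbit_finite[OF B] b0 unfolding N_def by auto
  then obtain a where a: "a \<in> N" "\<forall>b\<in>N. H a \<le> H b" by (rule finite_ex_min)
  have aB: "a \<in> B" "IP a (alpha j) = -1" using a(1) unfolding N_def by auto
  have "H a < H b - IP b (alpha j)" if bM: "b \<in> refl_moved n adj j B" for b
  proof (cases "IP b (alpha j) = -1")
    case True
    then show ?thesis using a(2) bM unfolding N_def refl_moved_def by force
  next
    case False
    then have pb: "IP b (alpha j) = 1" and bB: "b \<in> B" using bM unfolding refl_moved_def by auto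
    have "H a \<le> H b0" using a(2) b0 unfolding N_def by auto
    moreover have "H b0 < H b" using b0(3) bB pb by auto
    moreover have "IP b a = 0" using orbit_orth[OF B bB aB(1)] aB(2) pb by fastforce
    then have "H b \<noteq> H a + 1"
      using orth_roots_ht_gap[OF j pos_root pos_root _ aB(2) pb] orbit_pos[OF B] aB(1) bB by blast
    ultimately show ?thesis using pb by linarith
  qed
  moreover have "a \<in> refl_moved n adj j B" using aB unfolding refl_moved_def by auto
  ultimately show "\<exists>a\<in>refl_moved n adj j B. \<forall>b\<in>refl_moved n adj j B. H a < H b - IP b (alpha j)"
    by blast
qed

lemma prec_refl_iff_ascent:
  assumes "B \<in> Orb" "j \<in> {1..n}"
  shows "prec n B (act n adj (R j) B) \<longleftrightarrow> ascent n adj j B"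
  using prec_act_refl_iff[OF assms] moved_ht_criterion_iff_ascent[OF assms] by simp

lemma ascent_or_descent:
  assumes B: "B \<in> Orb" and j: "j \<in> {1..n}" and ne: "act n adj (R j) B \<noteq> B"
  shows "ascent n adj j B \<or> ascent n adj j (act n adj (R j) B)"
proof (rule ccontr)
  assume neg: "\<not> ?thesis"
  have BP: "B \<subseteq> Pos" by (rule orbit_pos[OF B])
  define M where "M = refl_moved n adj j B"
  have "M \<noteq> {}" using ne act_refl_eq_self_iff[OF B j] unfolding M_def by blast
  moreover have "finite M" using orbit_finite[OF B] unfolding M_def refl_moved_def by simp
  ultimately obtain a where a: "a \<in> M" "\<forall>b\<in>M. H a \<le> H b" using finite_ex_min by metis
  have "\<exists>d\<in>B. IP d (alpha j) = 1 \<and> H d \<le> H a"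
  proof (cases "IP a (alpha j) = 1")
    case True
    then show ?thesis using a unfolding M_def refl_moved_def by auto
  next
    case False
    then have "IP a (alpha j) = -1" "a \<in> B" using a(1) unfolding M_def refl_moved_def by auto
    then show ?thesis using neg unfolding ascent_def by force
  qed
  then obtain d where d: "d \<in> B" "IP d (alpha j) = 1" "H d \<le> H a" by blast
  have dP: "d \<in> Pos" using d(1) BP by blast
  have "ascent n adj j (pos_refl n adj j ` B)"
    unfolding ascent_def
  proof (intro bexI conjI ballI impI)
    show "pos_refl n adj j d \<in> pos_refl n adj j ` B" using d(1) by blast
    show "IP (pos_refl n adj j d) (alpha j) = -1"
      using ip_pos_refl_alpha[OF dP j j] d(2) ip_alpha_self[OF j] by simp
    fix e assume e: "e \<in> pos_refl n adj j ` B" "IP e (alpha j) = 1"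
    then obtain b where b: "b \<in> B" "e = pos_refl n adj j b" by blast
    have bP: "b \<in> Pos" using b(1) BP by blast
    have pb: "IP b (alpha j) = -1"
      using ip_pos_refl_alpha[OF bP j j] b(2) e(2) ip_alpha_self[OF j] by (auto split: if_splits)
    then have "H a \<le> H b" using a(2) b(1) unfolding M_def refl_moved_def by auto
    moreover have "H e = H b + 1" using ht_pos_refl[OF bP j] b(2) pb by simp
    moreover have "H (pos_refl n adj j d) = H d - 1" using ht_pos_refl[OF dP j] d(2) by simp
    ultimately show "H (pos_refl n adj j d) < H e" using d(3) by linarith
  qed
  then show False using neg act_refl_eq_image[OF BP j] by simp
qed

lemma not_ascent_min:
  assumes "finite C" "refl_moved n adj j C \<noteq> {}" "\<not> ascent n adj j C"
  shows "\<exists>d\<in>C. IP d (alpha j) = 1 \<and> (\<forall>b\<in>C. IP b (alpha j) = -1 \<longrightarrow> H d \<le> H b)"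
proof -
  define P where "P = {x\<in>C. IP x (alpha j) = 1}"
  have "P \<noteq> {}"
  proof
    assume P0: "P = {}"
    obtain x where "x \<in> C" "IP x (alpha j) = -1"
      using assms(2) P0 unfolding refl_moved_def P_def by auto
    then have "ascent n adj j C" unfolding ascent_def using P0 unfolding P_def by blast
    then show False using assms(3) by simp
  qed
  moreover have "finite P" using assms(1) unfolding P_def by simp
  ultimately obtain d where d: "d \<in> P" "\<forall>b\<in>P. H d \<le> H b" using finite_ex_min by metis
  have "H d \<le> H b" if b: "b \<in> C" "IP b (alpha j) = -1" for b
  proof (rule ccontr)
    assume "\<not> H d \<le> H b"
    then have "\<forall>e\<in>C. IP e (alpha j) = 1 \<longrightarrow> H b < H e" using d unfolding P_def by force
    then show False using assms(3) b unfolding ascent_def by blast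
  qed
  then show ?thesis using d(1) unfolding P_def by blast
qed

end

section \<open>Local confluence of ascending steps\<close>

text \<open>For distinct nodes \<open>i, j\<close>, everything about a positive root \<open>\<beta>\<close> that matters for the reflections
  \<open>r\<^sub>i, r\<^sub>j\<close> is its profile \<open>(\<langle>\<beta>,\<alpha>\<^sub>i\<rangle>, \<langle>\<beta>,\<alpha>\<^sub>j\<rangle>, ht \<beta>)\<close>, an integer triple \<open>(a, b, h)\<close>;
  \<open>c\<close> stands for \<open>\<langle>\<alpha>\<^sub>i,\<alpha>\<^sub>j\<rangle>\<close>. The following predicates collect the constraints that root geometry
  imposes on the profile of one root and on the profiles of two orthogonal roots. The confluence
  arguments below then reduce to finite case analyses on integer profiles.\<close>

definition root_profile_ok :: "int \<Rightarrow> int \<Rightarrow> int \<Rightarrow> int \<Rightarrow> bool" where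
  "root_profile_ok c a b h \<longleftrightarrow> (a = -1 \<or> a = 0 \<or> a = 1 \<or> a = 2) \<and> (b = -1 \<or> b = 0 \<or> b = 1 \<or> b = 2) \<and> h \<ge> 1 \<and>
     (a = 2 \<longrightarrow> b = c \<and> h = 1) \<and> (b = 2 \<longrightarrow> a = c \<and> h = 1) \<and>
     (c = -1 \<longrightarrow> a + b \<ge> -1 \<and> (a = 1 \<and> b = 1 \<longrightarrow> h = 2))"

definition orth_profiles_ok :: "int \<Rightarrow> int \<Rightarrow> int \<Rightarrow> int \<Rightarrow> int \<Rightarrow> int \<Rightarrow> int \<Rightarrow> bool" where
  "orth_profiles_ok c a1 b1 h1 a2 b2 h2 \<longleftrightarrow>
     (a2 = 2 \<longrightarrow> a1 = 0) \<and> (b2 = 2 \<longrightarrow> b1 = 0) \<and> (c = -1 \<longrightarrow> a2 = 1 \<and> b2 = 1 \<longrightarrow> a1 + b1 = 0) \<and>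
     (b1 - b2 = 2 \<longrightarrow> h1 - h2 \<noteq> 1) \<and> (a1 - a2 = 2 \<longrightarrow> h1 - h2 \<noteq> 1) \<and>
     ((a1 + b1) - (a2 + b2) = 3 + c \<longrightarrow> h1 - h2 \<noteq> 2)"

definition profiles_ok :: "bool \<Rightarrow> int \<Rightarrow> int \<Rightarrow> int \<Rightarrow> int \<Rightarrow> int \<Rightarrow> int \<Rightarrow> int \<Rightarrow> bool" where
  "profiles_ok e c a1 b1 h1 a2 b2 h2 \<longleftrightarrow> (if e then a1 = a2 \<and> b1 = b2 \<and> h1 = h2
     else orth_profiles_ok c a1 b1 h1 a2 b2 h2 \<and> orth_profiles_ok c a2 b2 h2 a1 b1 h1)"

text \<open>The profiles of three roots of an orthogonal set \<open>B\<close>: a witness \<open>w\<^sub>1\<close> of \<open>ascent i B\<close>, a witness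
  \<open>w\<^sub>2\<close> of \<open>ascent j B\<close>, and an arbitrary root \<open>d\<close>; \<open>e\<^sub>k\<^sub>l\<close> records which of them coincide.\<close>

definition ascent_profiles ::
    "int \<Rightarrow> bool \<Rightarrow> bool \<Rightarrow> bool \<Rightarrow> int \<Rightarrow> int \<Rightarrow> int \<Rightarrow> int \<Rightarrow> int \<Rightarrow> int \<Rightarrow> int \<Rightarrow> int \<Rightarrow> int \<Rightarrow> bool" where
  "ascent_profiles c e12 e13 e23 a1 b1 h1 a2 b2 h2 a3 b3 h3 \<longleftrightarrow>
     root_profile_ok c a1 b1 h1 \<and> root_profile_ok c a2 b2 h2 \<and> root_profile_ok c a3 b3 h3 \<and>
     profiles_ok e12 c a1 b1 h1 a2 b2 h2 \<and> profiles_ok e13 c a1 b1 h1 a3 b3 h3 \<and>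
     profiles_ok e23 c a2 b2 h2 a3 b3 h3 \<and>
     a1 = -1 \<and> (a2 = 1 \<longrightarrow> h1 < h2) \<and> (a3 = 1 \<longrightarrow> h1 < h3) \<and>
     b2 = -1 \<and> (b1 = 1 \<longrightarrow> h2 < h1) \<and> (b3 = 1 \<longrightarrow> h2 < h3)"

text \<open>The profile of \<open>r\<^sub>i \<beta>\<close> (corrected to be positive) in terms of the profile \<open>(a, b, h)\<close> of \<open>\<beta>\<close>.\<close>

definition refl_ip_self :: "int \<Rightarrow> int" where
  "refl_ip_self a = (if a = 2 then 2 else - a)"

definition refl_ip_other :: "int \<Rightarrow> int \<Rightarrow> int \<Rightarrow> int" where
  "refl_ip_other c a b = (if a = 2 then b else b - a * c)"

definition refl_ht :: "int \<Rightarrow> int \<Rightarrow> int" where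
  "refl_ht a h = (if a = 2 then h else h - a)"

lemma adjacent_ascent_profiles:
  assumes "ascent_profiles (-1) e12 e13 e23 a1 b1 h1 a2 b2 h2 a3 b3 h3"
    and "refl_ip_other (-1) a3 b3 = 1"
    and "refl_ip_other (-1) a1 b1 = -1 \<longrightarrow> refl_ht a3 h3 \<le> refl_ht a1 h1"
    and "refl_ip_other (-1) a2 b2 = -1 \<longrightarrow> refl_ht a3 h3 \<le> refl_ht a2 h2"
  shows False
  using assms
  unfolding ascent_profiles_def profiles_ok_def orth_profiles_ok_def root_profile_ok_def
    refl_ip_self_def refl_ip_other_def refl_ht_def
  by (smt (z3))

lemma adjacent_braid_ascent_profiles:
  assumes "ascent_profiles (-1) e12 e13 e23 a1 b1 h1 a2 b2 h2 a3 b3 h3"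
    and "refl_ip_other (-1) (refl_ip_other (-1) a3 b3) (refl_ip_self a3) = 1"
    and "refl_ip_other (-1) (refl_ip_other (-1) a1 b1) (refl_ip_self a1) = -1 \<longrightarrow>
      refl_ht (refl_ip_other (-1) a3 b3) (refl_ht a3 h3) \<le> refl_ht (refl_ip_other (-1) a1 b1) (refl_ht a1 h1)"
    and "refl_ip_other (-1) (refl_ip_other (-1) a2 b2) (refl_ip_self a2) = -1 \<longrightarrow>
      refl_ht (refl_ip_other (-1) a3 b3) (refl_ht a3 h3) \<le> refl_ht (refl_ip_other (-1) a2 b2) (refl_ht a2 h2)"
  shows False
  using assms
  unfolding ascent_profiles_def profiles_ok_def orth_profiles_ok_def root_profile_ok_def
    refl_ip_self_def refl_ip_other_def refl_ht_def
  by (smt (z3))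

lemma nonadjacent_ascent_profiles:
  assumes "ascent_profiles 0 e12 e13 e23 a1 b1 h1 a2 b2 h2 a3 b3 h3"
    and "refl_ip_other 0 a3 b3 = 1"
    and "refl_ip_other 0 a1 b1 = -1 \<longrightarrow> refl_ht a3 h3 \<le> refl_ht a1 h1"
    and "refl_ip_other 0 a2 b2 = -1 \<longrightarrow> refl_ht a3 h3 \<le> refl_ht a2 h2"
  shows "a2 = -1 \<and> b2 = -1 \<and> a3 = 1 \<and> b3 = 1 \<and> h3 = h2 + 2 \<and> \<not> e23"
  using assms
  unfolding ascent_profiles_def profiles_ok_def orth_profiles_ok_def root_profile_ok_def
    refl_ip_self_def refl_ip_other_def refl_ht_def
  by (smt (z3))

context spherical_simply_laced
begin

lemma profile_pos_refl:
  assumes t: "t \<in> Pos" and i: "i \<in> {1..n}" and j: "j \<in> {1..n}"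
  shows "IP (pos_refl n adj i t) (alpha j) = refl_ip_other (IP (alpha i) (alpha j)) (IP t (alpha i)) (IP t (alpha j))"
    and "IP (pos_refl n adj i t) (alpha i) = refl_ip_self (IP t (alpha i))"
    and "H (pos_refl n adj i t) = refl_ht (IP t (alpha i)) (H t)"
  using ip_pos_refl_alpha[OF t i j] ip_pos_refl_alpha[OF t i i] ht_pos_refl[OF t i] ip_alpha_self[OF i]
  unfolding refl_ip_self_def refl_ip_other_def refl_ht_def by (auto simp: mult.commute)

lemma refl_alpha_other:
  assumes i: "i \<in> {1..n}" and j: "j \<in> {1..n}" and ij: "i \<noteq> j"
  shows "R j (alpha i) \<in> Pos"
    and "IP t (R j (alpha i)) = IP t (alpha i) - IP (alpha i) (alpha j) * IP t (alpha j)"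
    and "H (R j (alpha i)) = 1 - IP (alpha i) (alpha j)"
proof -
  have "alpha i \<noteq> alpha j" using ij unfolding alpha_def by (metis zero_neq_one)
  then show "R j (alpha i) \<in> Pos" using refl_pos_root[OF alpha_pos_root[OF i] j] by blast
  show "IP t (R j (alpha i)) = IP t (alpha i) - IP (alpha i) (alpha j) * IP t (alpha j)"
    unfolding refl_def by (simp add: ip_diff_scale_right)
  show "H (R j (alpha i)) = 1 - IP (alpha i) (alpha j)"
    using ht_refl[OF j, of adj "alpha i"] ht_alpha[OF i] by simp
qed

lemma profile_pos_refl_pos_refl:
  assumes t: "t \<in> Pos" and a: "adj i j"
  shows "IP (pos_refl n adj j (pos_refl n adj i t)) (alpha i)
      = refl_ip_other (-1) (refl_ip_other (-1) (IP t (alpha i)) (IP t (alpha j))) (refl_ip_self (IP t (alpha i)))"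
    and "H (pos_refl n adj j (pos_refl n adj i t))
      = refl_ht (refl_ip_other (-1) (IP t (alpha i)) (IP t (alpha j))) (refl_ht (IP t (alpha i)) (H t))"
proof -
  have ij: "i \<in> {1..n}" "j \<in> {1..n}" using a sld unfolding simply_laced_diagram_def by auto
  have c: "IP (alpha i) (alpha j) = -1" "IP (alpha j) (alpha i) = -1"
    using a ij sld by (auto simp: ip_alpha_alpha cartan_def simply_laced_diagram_def)
  have it: "pos_refl n adj i t \<in> Pos" by (rule pos_refl_pos_root[OF t ij(1)])
  show "IP (pos_refl n adj j (pos_refl n adj i t)) (alpha i)
      = refl_ip_other (-1) (refl_ip_other (-1) (IP t (alpha i)) (IP t (alpha j))) (refl_ip_self (IP t (alpha i)))"
    and "H (pos_refl n adj j (pos_refl n adj i t))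
      = refl_ht (refl_ip_other (-1) (IP t (alpha i)) (IP t (alpha j))) (refl_ht (IP t (alpha i)) (H t))"
    using profile_pos_refl[OF t ij] profile_pos_refl[OF it ij(2,1)] c by simp_all
qed

text \<open>Besides the bounds on \<open>\<langle>t,\<alpha>\<^sub>i\<rangle>, \<langle>t,\<alpha>\<^sub>j\<rangle>\<close>, the root \<open>r\<^sub>j \<alpha>\<^sub>i\<close> supplies the constraint for adjacent
  nodes.\<close>

lemma pos_root_profile_ok:
  assumes tP: "t \<in> Pos" and i: "i \<in> {1..n}" and j: "j \<in> {1..n}" and ij: "i \<noteq> j"
  shows "root_profile_ok (IP (alpha i) (alpha j)) (IP t (alpha i)) (IP t (alpha j)) (H t)"
proof -
  let ?c = "IP (alpha i) (alpha j)" and ?\<gamma> = "R j (alpha i)"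
  have ra: "IP t (alpha i) \<in> {-1,0,1} \<or> t = alpha i" by (rule pos_root_ip_alpha_cases[OF tP i])
  have rb: "IP t (alpha j) \<in> {-1,0,1} \<or> t = alpha j" by (rule pos_root_ip_alpha_cases[OF tP j])
  have a2: "IP t (alpha i) = 2 \<longleftrightarrow> t = alpha i" by (rule pos_root_ip_alpha_eq_2_iff[OF tP i])
  have b2: "IP t (alpha j) = 2 \<longleftrightarrow> t = alpha j" by (rule pos_root_ip_alpha_eq_2_iff[OF tP j])
  have g: "?\<gamma> \<in> Pos" "IP t ?\<gamma> = IP t (alpha i) - ?c * IP t (alpha j)" "H ?\<gamma> = 1 - ?c"
    using refl_alpha_other[OF i j ij] by auto
  have gb: "IP t ?\<gamma> \<ge> -2" using ip_roots_bounds(2)[OF pos_root[OF tP] pos_root[OF g(1)]] .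
  have gn2: "IP t ?\<gamma> \<noteq> -2"
  proof
    assume "IP t ?\<gamma> = -2"
    then have "t = (\<lambda>k. - ?\<gamma> k)" using roots_uminus_if_ip_neg_2[OF pos_root[OF tP] pos_root[OF g(1)]] by blast
    then show False using uminus_pos_root_not_pos[OF g(1)] tP by simp
  qed
  have g2: "IP t ?\<gamma> = 2 \<Longrightarrow> t = ?\<gamma>"
    using roots_eq_if_ip_2[OF pos_root[OF tP] pos_root[OF g(1)]] by blast
  show ?thesis unfolding root_profile_ok_def
    using ra rb a2 b2 pos_root_ht_ge_1[OF tP] g gb gn2 g2 ip_alpha_self[OF i] ip_alpha_self[OF j]
      ip_commute[of "alpha j" "alpha i"] ht_alpha[OF i] ht_alpha[OF j]
    by auto
qed

lemma orth_pos_roots_profiles_ok: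
  assumes sP: "s \<in> Pos" and tP: "t \<in> Pos" and o: "IP s t = 0"
    and i: "i \<in> {1..n}" and j: "j \<in> {1..n}" and ij: "i \<noteq> j"
  shows "orth_profiles_ok (IP (alpha i) (alpha j)) (IP s (alpha i)) (IP s (alpha j)) (H s)
    (IP t (alpha i)) (IP t (alpha j)) (H t)"
proof -
  let ?c = "IP (alpha i) (alpha j)" and ?\<gamma> = "R j (alpha i)"
  have ns: "IP s s = 2" "IP t t = 2" using ip_root_self pos_root sP tP by auto
  have a2: "IP t (alpha i) = 2 \<longleftrightarrow> t = alpha i" by (rule pos_root_ip_alpha_eq_2_iff[OF tP i])
  have b2: "IP t (alpha j) = 2 \<longleftrightarrow> t = alpha j" by (rule pos_root_ip_alpha_eq_2_iff[OF tP j])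
  have g: "IP t ?\<gamma> = IP t (alpha i) - ?c * IP t (alpha j)" "IP s ?\<gamma> = IP s (alpha i) - ?c * IP s (alpha j)"
    using refl_alpha_other[OF i j ij] by auto
  have g2: "IP t ?\<gamma> = 2 \<Longrightarrow> t = ?\<gamma>"
    using roots_eq_if_ip_2[OF pos_root[OF tP] pos_root[OF refl_alpha_other(1)[OF i j ij]]] by blast
  have P01: "H s - H t - 0 - 1 \<noteq> 0" if "IP s (alpha j) - IP t (alpha j) = 2"
    using ht_pair_combination_nonzero[OF i j, of s t 0 1] ns o that ip_alpha_self[OF j] by simp
  have P10: "H s - H t - 1 - 0 \<noteq> 0" if "IP s (alpha i) - IP t (alpha i) = 2"
    using ht_pair_combination_nonzero[OF i j, of s t 1 0] ns o that ip_alpha_self[OF i] by simp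
  have P11: "H s - H t - 1 - 1 \<noteq> 0"
    if "(IP s (alpha i) + IP s (alpha j)) - (IP t (alpha i) + IP t (alpha j)) = 3 + ?c"
    using ht_pair_combination_nonzero[OF i j, of s t 1 1] ns o that by (simp add: algebra_simps)
  show ?thesis unfolding orth_profiles_ok_def
    using a2 b2 g g2 o P01 P10 P11 by auto
qed

end

context orthogonal_orbit
begin

lemma orbit_ascent_profiles:
  assumes B: "B \<in> Orb" and i: "i \<in> {1..n}" and j: "j \<in> {1..n}" and ij: "i \<noteq> j"
    and w1: "w1 \<in> B" "IP w1 (alpha i) = -1" "\<forall>x\<in>B. IP x (alpha i) = 1 \<longrightarrow> H w1 < H x"
    and w2: "w2 \<in> B" "IP w2 (alpha j) = -1" "\<forall>x\<in>B. IP x (alpha j) = 1 \<longrightarrow> H w2 < H x"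
    and d: "d \<in> B"
  shows "ascent_profiles (IP (alpha i) (alpha j)) (w1 = w2) (w1 = d) (w2 = d)
    (IP w1 (alpha i)) (IP w1 (alpha j)) (H w1) (IP w2 (alpha i)) (IP w2 (alpha j)) (H w2)
    (IP d (alpha i)) (IP d (alpha j)) (H d)"
proof -
  have prof: "root_profile_ok (IP (alpha i) (alpha j)) (IP t (alpha i)) (IP t (alpha j)) (H t)" if "t \<in> B" for t
    using pos_root_profile_ok[OF _ i j ij] that orbit_pos[OF B] by blast
  have pair: "profiles_ok (s = t) (IP (alpha i) (alpha j)) (IP s (alpha i)) (IP s (alpha j)) (H s)
      (IP t (alpha i)) (IP t (alpha j)) (H t)" if "s \<in> B" "t \<in> B" for s t
    using orth_pos_roots_profiles_ok[OF _ _ _ i j ij] orbit_orth[OF B] ip_commute that orbit_pos[OF B]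
    unfolding profiles_ok_def by (metis subsetD)
  show ?thesis
    unfolding ascent_profiles_def using prof pair w1 w2 d by blast
qed

text \<open>If \<open>B\<close> ascends along \<open>i\<close> and \<open>j\<close>, then after the step along \<open>i\<close> the step along \<open>j\<close> (and, for
  adjacent nodes, the next step along \<open>i\<close>) is still ascending or trivial: a root violating this would
  have impossible profiles.\<close>

lemma ascent_after_adjacent_refl:
  assumes B: "B \<in> Orb" and a: "adj i j" and ui: "ascent n adj i B" and uj: "ascent n adj j B"
  shows "refl_moved n adj j (act n adj (R i) B) = {} \<or> ascent n adj j (act n adj (R i) B)"
proof (rule ccontr)
  assume neg: "\<not> ?thesis"
  have ij: "i \<in> {1..n}" "j \<in> {1..n}" "i \<noteq> j" using a sld unfolding simply_laced_diagram_def by auto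
  have c: "IP (alpha i) (alpha j) = -1" using a ij by (simp add: ip_alpha_alpha cartan_def)
  have BP: "B \<subseteq> Pos" by (rule orbit_pos[OF B])
  have Ceq: "act n adj (R i) B = pos_refl n adj i ` B" by (rule act_refl_eq_image[OF BP ij(1)])
  obtain d' where d': "d' \<in> act n adj (R i) B" "IP d' (alpha j) = 1"
    "\<forall>b\<in>act n adj (R i) B. IP b (alpha j) = -1 \<longrightarrow> H d' \<le> H b"
    using not_ascent_min[OF orbit_finite[OF orbit_refl_closed[OF B ij(1)]]] neg by blast
  obtain d where d: "d \<in> B" "d' = pos_refl n adj i d" using d'(1) Ceq by blast
  obtain w1 where w1: "w1 \<in> B" "IP w1 (alpha i) = -1" "\<forall>x\<in>B. IP x (alpha i) = 1 \<longrightarrow> H w1 < H x"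
    using ui unfolding ascent_def by blast
  obtain w2 where w2: "w2 \<in> B" "IP w2 (alpha j) = -1" "\<forall>x\<in>B. IP x (alpha j) = 1 \<longrightarrow> H w2 < H x"
    using uj unfolding ascent_def by blast
  note prof = profile_pos_refl[OF subsetD[OF BP] ij(1,2)]
  have min: "refl_ip_other (-1) (IP w (alpha i)) (IP w (alpha j)) = -1 \<longrightarrow>
      refl_ht (IP d (alpha i)) (H d) \<le> refl_ht (IP w (alpha i)) (H w)" if "w \<in> B" for w
    using d'(3) Ceq d prof[OF that] prof[OF d(1)] c that by auto
  show False
    by (rule adjacent_ascent_profiles[OF _ _ min[OF w1(1)] min[OF w2(1)]])
      (use orbit_ascent_profiles[OF B ij w1 w2 d(1)] c d'(2) d prof in simp_all)
qed

lemma ascent_after_braid_refls: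
  assumes B: "B \<in> Orb" and a: "adj i j" and ui: "ascent n adj i B" and uj: "ascent n adj j B"
  shows "refl_moved n adj i (act n adj (R j) (act n adj (R i) B)) = {}
    \<or> ascent n adj i (act n adj (R j) (act n adj (R i) B))"
proof (rule ccontr)
  assume neg: "\<not> ?thesis"
  have ij: "i \<in> {1..n}" "j \<in> {1..n}" "i \<noteq> j" using a sld unfolding simply_laced_diagram_def by auto
  have BP: "B \<subseteq> Pos" by (rule orbit_pos[OF B])
  define D where "D = act n adj (R j) (act n adj (R i) B)"
  have Deq: "D = pos_refl n adj j ` pos_refl n adj i ` B"
    unfolding D_def using act_refl_eq_image[OF orbit_pos[OF orbit_refl_closed[OF B ij(1)]] ij(2)]
      act_refl_eq_image[OF BP ij(1)] by simp
  obtain d' where d': "d' \<in> D" "IP d' (alpha i) = 1" "\<forall>b\<in>D. IP b (alpha i) = -1 \<longrightarrow> H d' \<le> H b"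
    using not_ascent_min[OF orbit_finite] neg orbit_refl_closed[OF orbit_refl_closed[OF B ij(1)] ij(2)]
    unfolding D_def by blast
  obtain d where d: "d \<in> B" "d' = pos_refl n adj j (pos_refl n adj i d)" using d'(1) Deq by blast
  obtain w1 where w1: "w1 \<in> B" "IP w1 (alpha i) = -1" "\<forall>x\<in>B. IP x (alpha i) = 1 \<longrightarrow> H w1 < H x"
    using ui unfolding ascent_def by blast
  obtain w2 where w2: "w2 \<in> B" "IP w2 (alpha j) = -1" "\<forall>x\<in>B. IP x (alpha j) = 1 \<longrightarrow> H w2 < H x"
    using uj unfolding ascent_def by blast
  note prof = profile_pos_refl_pos_refl[OF subsetD[OF BP] a]
  have c: "IP (alpha i) (alpha j) = -1" using a ij by (simp add: ip_alpha_alpha cartan_def)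
  have min: "refl_ip_other (-1) (refl_ip_other (-1) (IP w (alpha i)) (IP w (alpha j))) (refl_ip_self (IP w (alpha i))) = -1
      \<longrightarrow> refl_ht (refl_ip_other (-1) (IP d (alpha i)) (IP d (alpha j))) (refl_ht (IP d (alpha i)) (H d))
        \<le> refl_ht (refl_ip_other (-1) (IP w (alpha i)) (IP w (alpha j))) (refl_ht (IP w (alpha i)) (H w))"
    if "w \<in> B" for w
    using d'(3) Deq d prof[OF that] prof[OF d(1)] that by auto
  show False
    by (rule adjacent_braid_ascent_profiles[OF _ _ min[OF w1(1)] min[OF w2(1)]])
      (use orbit_ascent_profiles[OF B ij w1 w2 d(1)] c d'(2) d prof in simp_all)
qed

lemma nonadjacent_ascent_obstruction:
  assumes B: "B \<in> Orb" and ij: "i \<in> {1..n}" "j \<in> {1..n}" "i \<noteq> j" and na: "\<not> adj i j"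
    and ui: "ascent n adj i B" and uj: "ascent n adj j B"
    and neg: "refl_moved n adj j (act n adj (R i) B) \<noteq> {}" "\<not> ascent n adj j (act n adj (R i) B)"
  obtains w where "w \<in> B" "IP w (alpha i) = -1" "IP w (alpha j) = -1"
    and "(\<lambda>k. w k + alpha i k + alpha j k) \<in> B"
proof -
  have c: "IP (alpha i) (alpha j) = 0" using ij na by (simp add: ip_alpha_alpha cartan_def)
  have BP: "B \<subseteq> Pos" by (rule orbit_pos[OF B])
  have Ceq: "act n adj (R i) B = pos_refl n adj i ` B" by (rule act_refl_eq_image[OF BP ij(1)])
  obtain d' where d': "d' \<in> act n adj (R i) B" "IP d' (alpha j) = 1"
    "\<forall>b\<in>act n adj (R i) B. IP b (alpha j) = -1 \<longrightarrow> H d' \<le> H b"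
    using not_ascent_min[OF orbit_finite[OF orbit_refl_closed[OF B ij(1)]]] neg by blast
  obtain d where d: "d \<in> B" "d' = pos_refl n adj i d" using d'(1) Ceq by blast
  obtain w1 where w1: "w1 \<in> B" "IP w1 (alpha i) = -1" "\<forall>x\<in>B. IP x (alpha i) = 1 \<longrightarrow> H w1 < H x"
    using ui unfolding ascent_def by blast
  obtain w2 where w2: "w2 \<in> B" "IP w2 (alpha j) = -1" "\<forall>x\<in>B. IP x (alpha j) = 1 \<longrightarrow> H w2 < H x"
    using uj unfolding ascent_def by blast
  note prof = profile_pos_refl[OF subsetD[OF BP] ij(1,2)]
  have min: "refl_ip_other 0 (IP w (alpha i)) (IP w (alpha j)) = -1 \<longrightarrow>
      refl_ht (IP d (alpha i)) (H d) \<le> refl_ht (IP w (alpha i)) (H w)" if "w \<in> B" for w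
    using d'(3) Ceq d prof[OF that] prof[OF d(1)] c that by auto
  have cfg: "IP w2 (alpha i) = -1 \<and> IP w2 (alpha j) = -1 \<and> IP d (alpha i) = 1 \<and> IP d (alpha j) = 1
      \<and> H d = H w2 + 2 \<and> w2 \<noteq> d"
    by (rule nonadjacent_ascent_profiles[OF _ _ min[OF w1(1)] min[OF w2(1)]])
      (use orbit_ascent_profiles[OF B ij w1 w2 d(1)] c d'(2) d prof in simp_all)
  have "IP d w2 = 0" using orbit_orth[OF B d(1) w2(1)] cfg by auto
  then have "d = (\<lambda>k. w2 k + alpha i k + alpha j k)"
    using orth_roots_eq_add_alphas[OF ij(1,2) c pos_root pos_root] d(1) w2(1) BP cfg by blast
  then show ?thesis using that w2(1) cfg d(1) by blast
qed

text \<open>Here admissibility enters: in \<open>r\<^sub>i B\<close> the obstruction becomes the pair \<open>\<gamma> = w + \<alpha>\<^sub>j\<close>,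
  \<open>\<gamma> - \<alpha>\<^sub>j + \<alpha>\<^sub>i = w + \<alpha>\<^sub>i\<close>.\<close>

lemma ascent_after_nonadjacent_refl:
  assumes adm: "admissible n adj Orb" and B: "B \<in> Orb" and ij: "i \<in> {1..n}" "j \<in> {1..n}" "i \<noteq> j"
    and na: "\<not> adj i j" and ui: "ascent n adj i B" and uj: "ascent n adj j B"
  shows "refl_moved n adj j (act n adj (R i) B) = {} \<or> ascent n adj j (act n adj (R i) B)
    \<or> act n adj (R i) B = act n adj (R j) B"
proof (rule ccontr)
  assume "\<not> ?thesis"
  then have neg: "refl_moved n adj j (act n adj (R i) B) \<noteq> {}" "\<not> ascent n adj j (act n adj (R i) B)"
    and ne: "act n adj (R i) B \<noteq> act n adj (R j) B" by auto
  obtain w where w: "w \<in> B" "IP w (alpha i) = -1" "IP w (alpha j) = -1"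
    and d: "(\<lambda>k. w k + alpha i k + alpha j k) \<in> B"
    using nonadjacent_ascent_obstruction[OF B ij na ui uj neg] by blast
  define C where "C = act n adj (R i) B"
  have C: "C \<in> Orb" "C = pos_refl n adj i ` B"
    unfolding C_def using orbit_refl_closed[OF B ij(1)] act_refl_eq_image[OF orbit_pos[OF B] ij(1)] by auto
  have c: "IP (alpha j) (alpha i) = 0" using ij na sld by (auto simp: ip_alpha_alpha cartan_def simply_laced_diagram_def)
  have "pos_refl n adj i w = (\<lambda>k. w k + alpha i k)"
    using w(2) ip_alpha_self[OF ij(1)] unfolding pos_refl_def refl_def by auto
  then have wi: "(\<lambda>k. w k + alpha i k) \<in> C" using C(2) w(1) by (metis image_eqI)
  have "IP (\<lambda>k. w k + alpha i k + alpha j k) (alpha i) = 1"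
    using w(2) c ip_alpha_self[OF ij(1)] by (simp add: ip_add_left)
  then have "pos_refl n adj i (\<lambda>k. w k + alpha i k + alpha j k) = (\<lambda>k. w k + alpha j k)"
    using ip_alpha_self[OF ij(1)] unfolding pos_refl_def refl_def by auto
  then have wj: "(\<lambda>k. w k + alpha j k) \<in> C" using C(2) d by (metis image_eqI)
  have "act n adj (R j) C = act n adj (R i) C"
    using adm C(1) ij wi wj na sld unfolding admissible_def simply_laced_diagram_def by fastforce
  then have "act n adj (R j) C = B" using act_refl_involutive[OF B ij(1)] unfolding C_def by simp
  then have "act n adj (R j) B = C" using act_refl_involutive[OF C(1) ij(2)] by metis
  then show False using ne unfolding C_def by simp
qed

end

section \<open>Termination and confluence\<close>

lemma newman:
  assumes wf: "wfp r\<inverse>\<inverse>"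
    and local_confluent: "\<And>x y z. r x y \<Longrightarrow> r x z \<Longrightarrow> \<exists>u. r\<^sup>*\<^sup>* y u \<and> r\<^sup>*\<^sup>* z u"
  shows "confluentp r"
proof (rule confluentpI)
  show "\<exists>u. r\<^sup>*\<^sup>* y u \<and> r\<^sup>*\<^sup>* z u" if "r\<^sup>*\<^sup>* x y" "r\<^sup>*\<^sup>* x z" for x y z
    using that
  proof (induction x arbitrary: y z rule: wfp_induct_rule[OF wf])
    case (1 x)
    show ?case
    proof (cases "x = y \<or> x = z")
      case True
      then show ?thesis using "1.prems" by blast
    next
      case False
      then obtain y1 z1 where y1: "r x y1" "r\<^sup>*\<^sup>* y1 y" and z1: "r x z1" "r\<^sup>*\<^sup>* z1 z"
        using "1.prems" by (metis converse_rtranclpE)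
      obtain u where u: "r\<^sup>*\<^sup>* y1 u" "r\<^sup>*\<^sup>* z1 u" using local_confluent[OF y1(1) z1(1)] by blast
      obtain v where v: "r\<^sup>*\<^sup>* y v" "r\<^sup>*\<^sup>* u v" using "1.IH"[of y1 y u] y1 u(1) by auto
      obtain t where t: "r\<^sup>*\<^sup>* z t" "r\<^sup>*\<^sup>* v t"
        using "1.IH"[of z1 z v] z1 u(2) v(2) by (auto intro: rtranclp_trans)
      show ?thesis using v(1) t by (blast intro: rtranclp_trans)
    qed
  qed
qed

lemma sum_power_less_power:
  fixes K :: nat
  assumes S: "finite S" and card: "card S < K" and e: "\<forall>c\<in>S. e c < m"
  shows "(\<Sum>c\<in>S. K ^ e c) < K ^ m"
proof (cases "S = {}")
  case False
  then obtain c where "c \<in> S" by blast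
  then have "m \<noteq> 0" using e by fastforce
  then have m: "K ^ m = K * K ^ (m - 1)" by (simp add: power_eq_if)
  have "(\<Sum>c\<in>S. K ^ e c) \<le> (\<Sum>c\<in>S. K ^ (m - 1))"
    using e card by (intro sum_mono power_increasing) auto
  also have "\<dots> = card S * K ^ (m - 1)" by simp
  also have "\<dots> < K * K ^ (m - 1)" using card by (intro mult_strict_right_mono) auto
  finally show ?thesis unfolding m .
qed (use card in simp)

text \<open>Reading the heights of a set from the smallest upwards, in base \<open>|P| + 1\<close>: a set that wins the
  comparison of minimal heights of the symmetric difference has the larger potential.\<close>

definition height_potential :: "('a \<Rightarrow> int) \<Rightarrow> 'a set \<Rightarrow> 'a set \<Rightarrow> nat" where
  "height_potential h P B = (\<Sum>b\<in>B. (card P + 1) ^ nat (Max (h ` P) - h b))"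

lemma height_potential_less:
  assumes P: "finite P" and BP: "B \<subseteq> P" and CP: "C \<subseteq> P"
    and a: "a \<in> B - C" and lower: "\<forall>c\<in>C - B. h a < h c"
  shows "height_potential h P C < height_potential h P B"
proof -
  define K where "K = card P + 1"
  define e where "e b = nat (Max (h ` P) - h b)" for b
  have finB: "finite B" and finC: "finite C" using P BP CP finite_subset by auto
  have "e c < e a" if "c \<in> C - B" for c
  proof -
    have "h a < h c" "h c \<le> Max (h ` P)" using lower that CP P by auto
    then show ?thesis unfolding e_def by linarith
  qed
  moreover have "card (C - B) < K"
    using card_mono[OF P, of "C - B"] CP unfolding K_def by (auto simp: less_Suc_eq_le)
  ultimately have "(\<Sum>c\<in>C - B. K ^ e c) < K ^ e a"
    using finC by (intro sum_power_less_power) auto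
  also have "\<dots> \<le> (\<Sum>b\<in>B - C. K ^ e b)"
    by (rule member_le_sum) (use a finB in auto)
  finally have "(\<Sum>c\<in>C - B. K ^ e c) < (\<Sum>b\<in>B - C. K ^ e b)" .
  moreover have "height_potential h P B = (\<Sum>b\<in>B \<inter> C. K ^ e b) + (\<Sum>b\<in>B - C. K ^ e b)"
    unfolding height_potential_def K_def e_def using finB by (metis sum.Int_Diff)
  moreover have "height_potential h P C = (\<Sum>b\<in>B \<inter> C. K ^ e b) + (\<Sum>b\<in>C - B. K ^ e b)"
    unfolding height_potential_def K_def e_def using finC by (metis inf_commute sum.Int_Diff)
  ultimately show ?thesis by simp
qed

context orthogonal_orbit
begin

lemma mstep_iff:
  "mstep n adj Orb B C \<longleftrightarrow> B \<in> Orb \<and> (\<exists>j\<in>{1..n}. C = act n adj (R j) B \<and> ascent n adj j B)"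
  unfolding mstep_def using prec_refl_iff_ascent by blast

lemma mstep_orbit: "mstep n adj Orb B C \<Longrightarrow> C \<in> Orb"
  unfolding mstep_iff using orbit_refl_closed by blast

lemma mstep_height_potential_less:
  assumes "mstep n adj Orb B C"
  shows "height_potential H Pos C < height_potential H Pos B"
proof -
  obtain j where B: "B \<in> Orb" and j: "j \<in> {1..n}" and C: "C = act n adj (R j) B" and "prec n B C"
    using assms unfolding mstep_def by blast
  then have "C \<noteq> B" and lt: "Min (H ` (B - C)) < Min (H ` (C - B))" unfolding prec_def by auto
  then have "B - C \<noteq> {}" "C - B \<noteq> {}"
    using orbit_diff_act_refl[OF B j] act_refl_eq_self_iff[OF B j] unfolding C by auto
  then obtain a where "a \<in> B - C" "\<forall>c\<in>C - B. H a < H c"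
    using lt Min_image_less_Min_image_iff[of "B - C" "C - B" H] orbit_finite B mstep_orbit[OF assms] by blast
  then show ?thesis
    using height_potential_less[OF pos_roots_finite] orbit_pos B mstep_orbit[OF assms] by blast
qed

lemma mstep_wfp: "wfp (mstep n adj Orb)\<inverse>\<inverse>"
  using mstep_height_potential_less by (intro wfp_if_convertible_to_nat) auto

lemma rtranclp_mstep_act_refl:
  assumes "B \<in> Orb" "j \<in> {1..n}" "refl_moved n adj j B = {} \<or> ascent n adj j B"
  shows "(mstep n adj Orb)\<^sup>*\<^sup>* B (act n adj (R j) B)"
  using assms act_refl_eq_self_iff[OF assms(1,2)] mstep_iff by fastforce

lemma act_refl_act_refl:
  assumes "B \<in> Orb" "i \<in> {1..n}" "j \<in> {1..n}"
  shows "act n adj (R i) (act n adj (R j) B) = act n adj (R i \<circ> R j) B"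
  using act_comp_orbit[OF assms(1) refl_in_weyl[OF assms(2)] refl_in_weyl[OF assms(3)]] .

lemma act_refl_act_refl_act_refl:
  assumes "B \<in> Orb" "i \<in> {1..n}" "j \<in> {1..n}" "k \<in> {1..n}"
  shows "act n adj (R i) (act n adj (R j) (act n adj (R k) B)) = act n adj (R i \<circ> R j \<circ> R k) B"
  using act_refl_act_refl[OF assms(1,3,4)]
    act_comp_orbit[OF assms(1) refl_in_weyl[OF assms(2)] weyl_comp_closed[OF refl_in_weyl[OF assms(3)] refl_in_weyl[OF assms(4)]]]
  by (simp add: comp_assoc)

lemma ascents_join_adjacent:
  assumes B: "B \<in> Orb" and a: "adj i j" and ui: "ascent n adj i B" and uj: "ascent n adj j B"
  shows "\<exists>D. (mstep n adj Orb)\<^sup>*\<^sup>* (act n adj (R i) B) D \<and> (mstep n adj Orb)\<^sup>*\<^sup>* (act n adj (R j) B) D"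
proof -
  let ?step = "(mstep n adj Orb)\<^sup>*\<^sup>*" and ?act = "\<lambda>i X. act n adj (R i) X"
  have ji: "adj j i" and i: "i \<in> {1..n}" and j: "j \<in> {1..n}"
    using a sld unfolding simply_laced_diagram_def by auto
  have C1: "?act i B \<in> Orb" and C2: "?act j B \<in> Orb" using orbit_refl_closed[OF B] i j by blast+
  have "?step (?act i B) (?act j (?act i B))"
    by (rule rtranclp_mstep_act_refl[OF C1 j]) (rule ascent_after_adjacent_refl[OF B a ui uj])
  moreover have "?step (?act j (?act i B)) (?act i (?act j (?act i B)))"
    by (rule rtranclp_mstep_act_refl[OF orbit_refl_closed[OF C1 j] i]) (rule ascent_after_braid_refls[OF B a ui uj])
  ultimately have path1: "?step (?act i B) (?act i (?act j (?act i B)))" by (rule rtranclp_trans)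
  have "?step (?act j B) (?act i (?act j B))"
    by (rule rtranclp_mstep_act_refl[OF C2 i]) (rule ascent_after_adjacent_refl[OF B ji uj ui])
  moreover have "?step (?act i (?act j B)) (?act j (?act i (?act j B)))"
    by (rule rtranclp_mstep_act_refl[OF orbit_refl_closed[OF C2 i] j]) (rule ascent_after_braid_refls[OF B ji uj ui])
  ultimately have path2: "?step (?act j B) (?act j (?act i (?act j B)))" by (rule rtranclp_trans)
  have "?act i (?act j (?act i B)) = ?act j (?act i (?act j B))"
    unfolding act_refl_act_refl_act_refl[OF B i j i] act_refl_act_refl_act_refl[OF B j i j] refl_braid[OF a] ..
  then show ?thesis using path1 path2 by auto
qed

lemma ascents_join_nonadjacent:
  assumes adm: "admissible n adj Orb" and B: "B \<in> Orb" and ij: "i \<in> {1..n}" "j \<in> {1..n}" "i \<noteq> j"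
    and na: "\<not> adj i j" and ui: "ascent n adj i B" and uj: "ascent n adj j B"
  shows "\<exists>D. (mstep n adj Orb)\<^sup>*\<^sup>* (act n adj (R i) B) D \<and> (mstep n adj Orb)\<^sup>*\<^sup>* (act n adj (R j) B) D"
proof (cases "act n adj (R i) B = act n adj (R j) B")
  case False
  let ?step = "(mstep n adj Orb)\<^sup>*\<^sup>*" and ?act = "\<lambda>i X. act n adj (R i) X"
  have ji: "\<not> adj j i" using na sld unfolding simply_laced_diagram_def by blast
  have path1: "?step (?act i B) (?act j (?act i B))"
    using ascent_after_nonadjacent_refl[OF adm B ij na ui uj] False
    by (intro rtranclp_mstep_act_refl[OF orbit_refl_closed[OF B ij(1)] ij(2)]) blast
  have path2: "?step (?act j B) (?act i (?act j B))"
    using ascent_after_nonadjacent_refl[OF adm B ij(2,1) ij(3)[symmetric] ji uj ui] False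
    by (intro rtranclp_mstep_act_refl[OF orbit_refl_closed[OF B ij(2)] ij(1)]) auto
  have "?act j (?act i B) = ?act i (?act j B)"
    using act_refl_act_refl[OF B ij(2,1)] act_refl_act_refl[OF B ij(1,2)] refl_commute[OF ij(2,1) ji] by simp
  then show ?thesis using path1 path2 by auto
next
  case True
  then show ?thesis by auto
qed

lemma mstep_local_confluent:
  assumes adm: "admissible n adj Orb" and s1: "mstep n adj Orb B C1" and s2: "mstep n adj Orb B C2"
  shows "\<exists>D. (mstep n adj Orb)\<^sup>*\<^sup>* C1 D \<and> (mstep n adj Orb)\<^sup>*\<^sup>* C2 D"
proof -
  obtain i where B: "B \<in> Orb" and i: "i \<in> {1..n}" "C1 = act n adj (R i) B" "ascent n adj i B"
    using s1 unfolding mstep_iff by blast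
  obtain j where j: "j \<in> {1..n}" "C2 = act n adj (R j) B" "ascent n adj j B"
    using s2 unfolding mstep_iff by blast
  consider "i = j" | "adj i j" | "i \<noteq> j" "\<not> adj i j" by blast
  then show ?thesis
  proof cases
    case 1
    then show ?thesis using i j by blast
  next
    case 2
    then show ?thesis using ascents_join_adjacent[OF B 2 i(3) j(3)] i(2) j(2) by simp
  next
    case 3
    then show ?thesis using ascents_join_nonadjacent[OF adm B i(1) j(1) 3 i(3) j(3)] i(2) j(2) by simp
  qed
qed

lemma mstep_confluent: "admissible n adj Orb \<Longrightarrow> confluentp (mstep n adj Orb)"
  using newman[OF mstep_wfp] mstep_local_confluent by blast

text \<open>The orbit is connected by simple reflections, and each of them is an ascending step in one
  direction or the other.\<close>

lemma orbit_equivclp_mstep: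
  assumes "B \<in> Orb" "B' \<in> Orb"
  shows "equivclp (mstep n adj Orb) B B'"
proof -
  have base_roots: "B1 \<subseteq> Phi" using base pos_root unfolding orth_pos_set_def by blast
  have link: "equivclp (mstep n adj Orb) (act n adj id B1) (act n adj w B1)" if "w \<in> W" for w
    using that
  proof (induction rule: weyl.induct)
    case (weyl_step w i)
    define X where "X = act n adj w B1"
    have X: "X \<in> Orb" unfolding X_def using weyl_step.hyps(1) by blast
    have i: "i \<in> {1..n}" by (rule weyl_step.hyps(2))
    have IH: "equivclp (mstep n adj Orb) (act n adj id B1) X" using weyl_step.IH unfolding X_def .
    have step: "mstep n adj Orb X (act n adj (R i) X) \<or> mstep n adj Orb (act n adj (R i) X) X"
      if "act n adj (R i) X \<noteq> X"
    proof -
      from ascent_or_descent[OF X i that]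
      show ?thesis
      proof
        assume "ascent n adj i X"
        then show ?thesis unfolding mstep_iff using X i by blast
      next
        assume "ascent n adj i (act n adj (R i) X)"
        then show ?thesis unfolding mstep_iff using orbit_refl_closed[OF X i] act_refl_involutive[OF X i] i by metis
      qed
    qed
    have "equivclp (mstep n adj Orb) (act n adj id B1) (act n adj (R i) X)"
    proof (cases "act n adj (R i) X = X")
      case False
      show ?thesis by (rule equivclp_into_equivclp[of "mstep n adj Orb", OF IH step[OF False]])
    qed (use IH in simp)
    then show ?case
      unfolding X_def act_comp[OF base_roots refl_in_weyl[OF i] weyl_step.hyps(1)] .
  qed simp
  obtain w w' where "w \<in> W" "B = act n adj w B1" "w' \<in> W" "B' = act n adj w' B1" using assms by blast
  then show ?thesis using equivclp_trans[OF equivclp_sym[OF link] link] by blast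
qed

lemma rtranclp_mstep_chain:
  assumes "(mstep n adj Orb)\<^sup>*\<^sup>* B B0"
  shows "\<exists>is. set is \<subseteq> {1..n} \<and>
           (\<forall>k < length is. mless n adj Orb (chain n adj is B0 k) (chain n adj is B0 (Suc k))) \<and>
           chain n adj is B0 0 = B"
  using assms
proof (induction rule: converse_rtranclp_induct)
  case base
  show ?case by (rule exI[of _ "[]"]) (simp add: chain_def)
next
  case (step B C)
  obtain js where js: "set js \<subseteq> {1..n}"
    "\<forall>k < length js. mless n adj Orb (chain n adj js B0 k) (chain n adj js B0 (Suc k))"
    "chain n adj js B0 0 = C" using step.IH by blast
  obtain j where B: "B \<in> Orb" and j: "j \<in> {1..n}" "C = act n adj (R j) B"
    using step.hyps(1) unfolding mstep_iff by blast
  have chain_Suc: "chain n adj (j # js) B0 (Suc k) = chain n adj js B0 k" for k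
    unfolding chain_def by simp
  have chain_0: "chain n adj (j # js) B0 0 = B"
    using js(3) act_refl_involutive[OF B j(1)] unfolding chain_def j(2) by simp
  have "mless n adj Orb B C" unfolding mless_def using step.hyps(1) by blast
  then have "\<forall>k < length (j # js). mless n adj Orb (chain n adj (j # js) B0 k) (chain n adj (j # js) B0 (Suc k))"
    using js(2,3) chain_0 chain_Suc by (auto simp: less_Suc_eq_0_disj)
  then show ?case using js(1) j(1) chain_0 by (intro exI[of _ "j # js"]) simp
qed

end

theorem lemma3p5:
  fixes n :: nat and adj :: "nat \<Rightarrow> nat \<Rightarrow> bool"
    and \<B> :: "(nat \<Rightarrow> int) set set" and B0 B :: "(nat \<Rightarrow> int) set"
  assumes "simply_laced_diagram n adj"
    and "spherical n adj"
    and "admissible n adj \<B>"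
    and "B0 \<in> \<B>"
    and "\<not> (\<exists>C\<in>\<B>. mless n adj \<B> B0 C)"
    and "B \<in> \<B>"
  shows "\<exists>is. set is \<subseteq> {1..n} \<and>
           (\<forall>k < length is. mless n adj \<B> (chain n adj is B0 k) (chain n adj is B0 (Suc k))) \<and>
           chain n adj is B0 0 = B"
proof -
  obtain B1 where B1: "orth_pos_set n adj B1" and orbit: "\<B> = {act n adj w B1 | w. w \<in> weyl n adj}"
    using assms(3) unfolding admissible_def is_orbit_def by blast
  interpret orthogonal_orbit n adj B1
    using assms(1,2) B1 unfolding spherical_def by unfold_locales
  have top: "\<not> mstep n adj \<B> B0 C" for C
    using assms(5) mstep_orbit[of B0 C] unfolding orbit mless_def by blast
  have "confluentp (mstep n adj \<B>)" using mstep_confluent assms(3) unfolding orbit .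
  moreover have "equivclp (mstep n adj \<B>) B B0" using orbit_equivclp_mstep assms(4,6) unfolding orbit by blast
  ultimately have "((mstep n adj \<B>)\<^sup>*\<^sup>* OO (mstep n adj \<B>)\<inverse>\<inverse>\<^sup>*\<^sup>*) B B0"
    using semiconfluentp_equivclp confluentp_imp_semiconfluentp by metis
  then obtain D where "(mstep n adj \<B>)\<^sup>*\<^sup>* B D" "(mstep n adj \<B>)\<^sup>*\<^sup>* B0 D"
    by (auto simp: rtranclp_conversep)
  moreover from this(2) have "D = B0" using top by (metis converse_rtranclpE)
  ultimately show ?thesis using rtranclp_mstep_chain unfolding orbit by blast
qed

end
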